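(* Fix $p\in[\tfrac23,1)$. Let $\zeta_p=1$ for $p>\tfrac23$ and $\zeta_{2/3}=e^{-1/4}$. Then, as $d\to\infty$, \[ \frac{\sum_{S\in\mathsf{Good}^{\mathsf{Even}}}2^{-N_p(S)}-\zeta_p\exp(\Phi_{\mathsf{Even}})}{\sigma_p\exp(\mu_p)}\xrightarrow{\mathbb P}0, \qquad \frac{\sum_{S\in\mathsf{Good}^{\mathsf{Even}}}2^{-N_p(S)}}{\zeta_p\exp(\Phi_{\mathsf{Even}})}\xrightarrow{\mathbb P}1, \] and the same two statements hold with $\mathsf{Even}$ replaced by $\mathsf{Odd}$.
   Context: Setup and notation: - $Q_d=\{0,1\}^d$ is the hypercube graph. - $\mathsf{Even}$ and $\mathsf{Odd}$ are the vertices of even and odd Hamming weight. - $Q_{d,p}$ is obtained by retaining each edge independently with probability $p$. - $N_p(v)$ is the number of neighbors of $v$ in $Q_{d,p}$; for $S$ within one side, $N_p(S)$ is the number of vertices adjacent in $Q_{d,p}$ to some vertex of $S$. - $\Phi_{\mathsf{Even}}=\sum_{v\in\mathsf{Even}}2^{-N_p(v)}$, and $\Phi_{\mathsf{Odd}}$ is defined analogously. - Two same-side vertices are $2$-neighbors if they have a common neighbor in $Q_d$. - $\mathsf{Good}^{\mathsf{Even}}$ is the collection of $S\subseteq\mathsf{Even}$ with $|S|\le 2^d/d^2$ and no two elements being $2$-neighbors; $\mathsf{Good}^{\mathsf{Odd}}$ is defined analogously. - $\mu_p=\tfrac12(2-p)^d$ and $\sigma_p^2=\tfrac12(\tfrac{4-3p}{2})^d$.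 *)

theory Defs
  imports "HOL-Probability.Probability"
begin

text \<open>Vertices of the hypercube Q_d are the subsets of {0..<d} (indicator of a 0/1 vector).\<close>
definition cube :: "nat \<Rightarrow> nat set set" where
  "cube d = Pow {..<d}"

definition evens :: "nat \<Rightarrow> nat set set" where
  "evens d = {x \<in> cube d. even (card x)}"

definition odds :: "nat \<Rightarrow> nat set set" where
  "odds d = {x \<in> cube d. odd (card x)}"

definition hedges :: "nat \<Rightarrow> nat set set set" where
  "hedges d = {{x, y} | x y. x \<in> cube d \<and> y \<in> cube d \<and> card ((x - y) \<union> (y - x)) = 1}"

text \<open>Q_{d,p}: each edge retained independently with probability p; an outcome is the
  indicator function of the retained edges.\<close>
definition Qdp :: "nat \<Rightarrow> real \<Rightarrow> (nat set set \<Rightarrow> bool) pmf" where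
  "Qdp d p = Pi_pmf (hedges d) False (\<lambda>_. bernoulli_pmf p)"

definition Np :: "nat \<Rightarrow> (nat set set \<Rightarrow> bool) \<Rightarrow> nat set set \<Rightarrow> nat" where
  "Np d G S = card {w \<in> cube d. \<exists>v\<in>S. {v, w} \<in> hedges d \<and> G {v, w}}"

definition Phi :: "nat \<Rightarrow> (nat set set \<Rightarrow> bool) \<Rightarrow> nat set set \<Rightarrow> real" where
  "Phi d G V = (\<Sum>v\<in>V. (1/2::real) ^ Np d G {v})"

definition two_nbrs :: "nat \<Rightarrow> nat set \<Rightarrow> nat set \<Rightarrow> bool" where
  "two_nbrs d u v \<longleftrightarrow> u \<noteq> v \<and> (\<exists>w\<in>cube d. {u, w} \<in> hedges d \<and> {v, w} \<in> hedges d)"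

definition Good :: "nat \<Rightarrow> nat set set \<Rightarrow> nat set set set" where
  "Good d V = {S. S \<subseteq> V \<and> real (card S) \<le> 2 ^ d / (real d)\<^sup>2 \<and>
                  (\<forall>u\<in>S. \<forall>v\<in>S. \<not> two_nbrs d u v)}"

definition mu_p :: "real \<Rightarrow> nat \<Rightarrow> real" where
  "mu_p p d = (1/2) * (2 - p) ^ d"

definition sigma_p :: "real \<Rightarrow> nat \<Rightarrow> real" where
  "sigma_p p d = sqrt ((1/2) * ((4 - 3 * p) / 2) ^ d)"

definition zeta_p :: "real \<Rightarrow> real" where
  "zeta_p p = (if p = 2/3 then exp (- 1/4) else 1)"

definition GoodSum :: "nat \<Rightarrow> (nat set set \<Rightarrow> bool) \<Rightarrow> nat set set \<Rightarrow> real" where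
  "GoodSum d G V = (\<Sum>S\<in>Good d V. (1/2::real) ^ Np d G S)"

end

theory Submission
  imports Defs "HOL-Real_Asymp.Real_Asymp"
begin

(*
  Write x_v = 2^(-N_p(v)) for the vertices v of one side V.  For a good set S the
  neighbourhoods of its vertices are disjoint, so 2^(-N_p(S)) is the product of the x_v over S,
  and the good sum is the part of  prod_v (1 + x_v) = sum_{S <= V} prod_{v in S} x_v  coming
  from small sets without 2-neighbours.  The product lies between exp(Phi - Q/2) and
  exp(Phi - Q/2 + C/3), where Q and C are the sums of the x_v^2 and x_v^3; the discarded sets
  are controlled by a Chernoff-type bound (too large) and by the pair sum B over 2-neighbours.
  Hence, whenever Phi <= M/4 with M = 2^d/d^2,
     |GoodSum / e^Phi - e^(-s/2)| <= |Q - s|/2 + C/3 + B + e^(-M/2)     for all s >= 0.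
  Distinct vertices of one side share no edge, so the moments of the x_v factorise:
  E Phi = mu_p, Var Phi <= sigma_p^2, E Q = sigma_p^2, and first and second moment bounds show
  that, with s = sigma_p^2, every error term is o(sigma_p) in probability once p >= 2/3.
  Finally e^(-sigma_p^2/2) - zeta_p = o(sigma_p), while e^(Phi - mu_p) stays bounded in
  probability by Chebyshev's inequality.
*)

section \<open>Hypercube combinatorics\<close>

definition flip :: "nat \<Rightarrow> nat set \<Rightarrow> nat set" where
  "flip i v = (if i \<in> v then v - {i} else insert i v)"

lemma flip_neq: "flip i v \<noteq> v"
  unfolding flip_def by auto

lemma flip_flip [simp]: "flip i (flip i v) = v"
  unfolding flip_def by auto

lemma mem_flip: "j \<in> flip i v \<longleftrightarrow> (if j = i then j \<notin> v else j \<in> v)"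
  unfolding flip_def by auto

lemma flip_in_cube: "v \<in> cube d \<Longrightarrow> i < d \<Longrightarrow> flip i v \<in> cube d"
  unfolding flip_def cube_def by auto

lemma flip_eq_flipD: "flip i v = flip j v \<Longrightarrow> i = j"
  by (metis mem_flip)

lemma finite_cube [simp]: "finite (cube d)"
  unfolding cube_def by simp

lemma finite_cube_elem: "v \<in> cube d \<Longrightarrow> finite v"
  unfolding cube_def by (auto intro: finite_subset)

lemma even_card_flip_iff: "finite v \<Longrightarrow> even (card (flip i v)) \<longleftrightarrow> odd (card v)"
  by (cases "i \<in> v") (auto simp: flip_def card_Diff_singleton card_gt_0_iff)

lemma finite_hedges [simp]: "finite (hedges d)"
  by (rule finite_subset[of _ "Pow (cube d)"]) (auto simp: hedges_def)

lemma flip_in_hedges: "v \<in> cube d \<Longrightarrow> i < d \<Longrightarrow> {v, flip i v} \<in> hedges d"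
proof -
  assume v: "v \<in> cube d" and i: "i < d"
  have "(v - flip i v) \<union> (flip i v - v) = {i}"
    by (auto simp: mem_flip split: if_splits)
  then show ?thesis
    using flip_in_cube[OF v i] v unfolding hedges_def by force
qed

lemma hedgesE:
  assumes "e \<in> hedges d" "v \<in> e"
  obtains i where "i < d" "v \<in> cube d" "e = {v, flip i v}"
proof -
  obtain x y where e: "e = {x, y}" and xy: "x \<in> cube d" "y \<in> cube d"
    and "card ((x - y) \<union> (y - x)) = 1"
    using assms(1) unfolding hedges_def by blast
  then obtain i where i: "(x - y) \<union> (y - x) = {i}"
    by (auto simp: card_1_singleton_iff)
  then have "i < d"
    using xy unfolding cube_def by blast
  moreover have "y = flip i x" "x = flip i y"
    using i by (auto simp: mem_flip set_eq_iff split: if_splits)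
  ultimately show ?thesis
    using that assms(2) e xy by (auto simp: insert_commute)
qed

lemma hedges_doubletonD:
  assumes "{v, w} \<in> hedges d"
  obtains i where "i < d" "v \<in> cube d" "w \<in> cube d" "w = flip i v"
proof -
  obtain i where "i < d" "v \<in> cube d" "{v, w} = {v, flip i v}"
    using hedgesE[OF assms] by blast
  with that show ?thesis
    using flip_neq flip_in_cube by (metis doubleton_eq_iff)
qed

lemma hedges_at_eq: "v \<in> cube d \<Longrightarrow> {e \<in> hedges d. v \<in> e} = (\<lambda>i. {v, flip i v}) ` {..<d}"
proof (intro equalityI subsetI)
  fix e assume "e \<in> {e \<in> hedges d. v \<in> e}"
  then obtain i where "i < d" "e = {v, flip i v}"
    using hedgesE by blast
  then show "e \<in> (\<lambda>i. {v, flip i v}) ` {..<d}"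
    by blast
qed (auto intro: flip_in_hedges)

lemma card_hedges_at: "v \<in> cube d \<Longrightarrow> card {e \<in> hedges d. v \<in> e} = d"
proof -
  assume v: "v \<in> cube d"
  have "inj_on (\<lambda>i. {v, flip i v}) {..<d}"
    by (rule inj_onI) (metis doubleton_eq_iff flip_eq_flipD flip_neq)
  then show ?thesis
    by (simp add: hedges_at_eq[OF v] card_image)
qed

lemma card_two_nbrs_le: "u \<in> cube d \<Longrightarrow> card {v \<in> V. two_nbrs d u v} \<le> d ^ 2"
proof -
  assume u: "u \<in> cube d"
  define f where "f ij = flip (snd ij) (flip (fst ij) u)" for ij
  have "{v \<in> V. two_nbrs d u v} \<subseteq> f ` ({..<d} \<times> {..<d})"
  proof
    fix v assume "v \<in> {v \<in> V. two_nbrs d u v}"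
    then obtain w where "{u, w} \<in> hedges d" "{v, w} \<in> hedges d"
      unfolding two_nbrs_def by blast
    then obtain i j where "i < d" "j < d" "w = flip i u" "w = flip j v"
      by (metis hedges_doubletonD)
    then have "v = f (i, j)"
      unfolding f_def by (metis flip_flip fst_conv snd_conv)
    then show "v \<in> f ` ({..<d} \<times> {..<d})"
      using \<open>i < d\<close> \<open>j < d\<close> by blast
  qed
  then have "card {v \<in> V. two_nbrs d u v} \<le> card (f ` ({..<d} \<times> {..<d}))"
    by (intro card_mono) auto
  also have "\<dots> \<le> d ^ 2"
    using card_image_le[of "{..<d} \<times> {..<d}" f] by (simp add: power2_eq_square)
  finally show ?thesis .
qed

definition cube_indep :: "nat \<Rightarrow> nat set set \<Rightarrow> bool" where
  "cube_indep d V \<longleftrightarrow> V \<subseteq> cube d \<and> (\<forall>u\<in>V. \<forall>v\<in>V. {u, v} \<notin> hedges d)"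

lemma cube_indep_subset: "cube_indep d V \<Longrightarrow> W \<subseteq> V \<Longrightarrow> cube_indep d W"
  unfolding cube_indep_def by blast

lemma finite_cube_indep: "cube_indep d V \<Longrightarrow> finite V"
  unfolding cube_indep_def using finite_cube finite_subset by blast

lemma cube_indep_inter_hedge:
  assumes "cube_indep d V" "e \<in> hedges d"
  shows "V \<inter> e = {} \<or> (\<exists>v. V \<inter> e = {v})"
proof (rule ccontr)
  assume "\<not> ?thesis"
  then obtain u v where u: "u \<in> V" "u \<in> e" and v: "v \<in> V" "v \<in> e" and "u \<noteq> v"
    by blast
  obtain i where "e = {u, flip i u}"
    using hedgesE[OF assms(2) u(2)] by metis
  then have "e = {u, v}"
    using v(2) \<open>u \<noteq> v\<close> by auto
  then show False
    using assms u(1) v(1) unfolding cube_indep_def by metis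
qed

lemma hedges_parity: "{v, w} \<in> hedges d \<Longrightarrow> even (card w) \<longleftrightarrow> odd (card v)"
proof -
  assume "{v, w} \<in> hedges d"
  then obtain i where "v \<in> cube d" "w = flip i v"
    by (rule hedges_doubletonD)
  then show ?thesis
    using even_card_flip_iff finite_cube_elem by blast
qed

lemma cube_indep_evens: "cube_indep d (evens d)"
  unfolding cube_indep_def evens_def using hedges_parity by blast

lemma cube_indep_odds: "cube_indep d (odds d)"
  unfolding cube_indep_def odds_def using hedges_parity by blast

lemma card_evens_odds:
  assumes "1 \<le> d"
  shows "card (evens d) = 2 ^ (d - 1)" "card (odds d) = 2 ^ (d - 1)"
proof -
  have "bij_betw (flip 0) (evens d) (odds d)"
    by (rule bij_betw_byWitness[where f' = "flip 0"])
       (use assms in \<open>auto simp: evens_def odds_def flip_in_cube even_card_flip_iff finite_cube_elem\<close>)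
  then have "card (evens d) = card (odds d)"
    by (rule bij_betw_same_card)
  moreover have "card (evens d) + card (odds d) = 2 ^ d"
  proof -
    have "evens d \<union> odds d = cube d" "evens d \<inter> odds d = {}"
      unfolding evens_def odds_def by auto
    then show ?thesis
      by (metis card_Pow card_Un_disjoint cube_def finite_Un finite_cube finite_lessThan card_lessThan)
  qed
  moreover have "(2::nat) ^ d = 2 * 2 ^ (d - 1)"
    using assms by (cases d) simp_all
  ultimately show "card (evens d) = 2 ^ (d - 1)" "card (odds d) = 2 ^ (d - 1)"
    by simp_all
qed

lemma Np_singleton:
  assumes "v \<in> cube d"
  shows "Np d G {v} = card {e \<in> hedges d. v \<in> e \<and> G e}"
proof -
  have "{e \<in> hedges d. v \<in> e \<and> G e} = (\<lambda>w. {v, w}) ` {w \<in> cube d. {v, w} \<in> hedges d \<and> G {v, w}}"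
  proof (intro equalityI subsetI)
    fix e assume e: "e \<in> {e \<in> hedges d. v \<in> e \<and> G e}"
    then obtain i where "i < d" "e = {v, flip i v}"
      using hedgesE by blast
    then show "e \<in> (\<lambda>w. {v, w}) ` {w \<in> cube d. {v, w} \<in> hedges d \<and> G {v, w}}"
      using e assms flip_in_cube by blast
  qed auto
  moreover have "inj_on (\<lambda>w. {v, w}) {w \<in> cube d. {v, w} \<in> hedges d \<and> G {v, w}}"
    by (auto simp: inj_on_def doubleton_eq_iff)
  ultimately show ?thesis
    unfolding Np_def by (simp add: card_image)
qed

text \<open>Vertices that are not 2-neighbours have disjoint neighbourhoods.\<close>
lemma Np_eq_sum_singletons:
  assumes "S \<subseteq> cube d" and "\<forall>u\<in>S. \<forall>v\<in>S. \<not> two_nbrs d u v"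
  shows "Np d G S = (\<Sum>v\<in>S. Np d G {v})"
proof -
  define N where "N v = {w \<in> cube d. {v, w} \<in> hedges d \<and> G {v, w}}" for v
  have "finite S"
    using assms(1) finite_cube finite_subset by blast
  moreover have "\<forall>u\<in>S. \<forall>v\<in>S. u \<noteq> v \<longrightarrow> N u \<inter> N v = {}"
    using assms(2) unfolding N_def two_nbrs_def by blast
  ultimately have "card (\<Union>(N ` S)) = (\<Sum>v\<in>S. card (N v))"
    by (intro card_UN_disjoint) (auto simp: N_def)
  moreover have "{w \<in> cube d. \<exists>v\<in>S. {v, w} \<in> hedges d \<and> G {v, w}} = \<Union>(N ` S)"
    unfolding N_def by auto
  ultimately show ?thesis
    unfolding Np_def N_def by simp
qed

section \<open>Vertex weights and their joint moments\<close>

definition vert_weight :: "nat \<Rightarrow> (nat set set \<Rightarrow> bool) \<Rightarrow> nat set \<Rightarrow> real" where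
  "vert_weight d G v = (1/2) ^ Np d G {v}"

lemma vert_weight_nonneg: "0 \<le> vert_weight d G v"
  unfolding vert_weight_def by simp

lemma vert_weight_le_one: "vert_weight d G v \<le> 1"
  unfolding vert_weight_def by (simp add: power_le_one)

lemma Phi_eq_sum_vert_weight: "Phi d G V = (\<Sum>v\<in>V. vert_weight d G v)"
  unfolding Phi_def vert_weight_def ..

lemma GoodSum_eq_sum_prod_vert_weight:
  assumes "V \<subseteq> cube d"
  shows "GoodSum d G V = (\<Sum>S\<in>Good d V. \<Prod>v\<in>S. vert_weight d G v)"
  unfolding GoodSum_def
proof (rule sum.cong[OF refl])
  fix S assume "S \<in> Good d V"
  then have "S \<subseteq> cube d" "\<forall>u\<in>S. \<forall>v\<in>S. \<not> two_nbrs d u v"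
    using assms unfolding Good_def by auto
  then show "(1/2) ^ Np d G S = (\<Prod>v\<in>S. vert_weight d G v)"
    by (simp add: Np_eq_sum_singletons power_sum vert_weight_def)
qed

lemma vert_weight_pow_eq_prod:
  assumes "v \<in> cube d"
  shows "vert_weight d G v ^ k = (\<Prod>e\<in>hedges d. if v \<in> e \<and> G e then (1/2) ^ k else 1)"
  by (simp add: vert_weight_def Np_singleton[OF assms] prod.If_cases power_mult[symmetric]
      mult.commute Int_def)

definition bernoulli_half_pow_mean :: "real \<Rightarrow> nat \<Rightarrow> real" where
  "bernoulli_half_pow_mean p k = 1 - p + p * (1/2) ^ k"

lemma finite_set_pmf_Qdp: "finite (set_pmf (Qdp d p))"
  unfolding Qdp_def by (auto simp: set_Pi_pmf intro!: finite_PiE_dflt)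

lemma integrable_Qdp [simp]: "integrable (measure_pmf (Qdp d p)) (f :: _ \<Rightarrow> real)"
  by (rule integrable_measure_pmf_finite[OF finite_set_pmf_Qdp])

lemma expectation_bernoulli_prod_if:
  fixes c :: "'a \<Rightarrow> real"
  assumes "finite W" and "W \<inter> e = {} \<or> (\<exists>v. W \<inter> e = {v})" and "0 \<le> p" "p \<le> 1"
  shows "measure_pmf.expectation (bernoulli_pmf p) (\<lambda>b. \<Prod>v\<in>W. if v \<in> e \<and> b then c v else 1)
       = (\<Prod>v\<in>W. if v \<in> e then 1 - p + p * c v else 1)"
  using assms(2)
proof
  assume "W \<inter> e = {}"
  then have "\<And>v. v \<in> W \<Longrightarrow> v \<notin> e"
    by blast
  then show ?thesis
    using assms(3,4) by simp
next
  assume "\<exists>v. W \<inter> e = {v}"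
  then obtain v0 where "{v \<in> W. v \<in> e} = {v0}"
    by blast
  then show ?thesis
    using assms(3,4) by (simp add: prod.inter_filter[OF assms(1), symmetric] algebra_simps)
qed

text \<open>Distinct vertices of an independent set share no edge, so their weights are products
  over disjoint sets of independent edges.\<close>
lemma expectation_prod_vert_weight_pow:
  assumes W: "cube_indep d W" and p: "0 \<le> p" "p \<le> 1"
  shows "measure_pmf.expectation (Qdp d p) (\<lambda>G. \<Prod>v\<in>W. vert_weight d G v ^ k v)
       = (\<Prod>v\<in>W. bernoulli_half_pow_mean p (k v) ^ d)"
proof -
  define g where "g e b = (\<Prod>v\<in>W. if v \<in> e \<and> b then (1/2::real) ^ k v else 1)" for e b
  have finW: "finite W" and Wc: "W \<subseteq> cube d"
    using W finite_cube_indep unfolding cube_indep_def by auto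
  have "(\<Prod>v\<in>W. vert_weight d G v ^ k v)
      = (\<Prod>v\<in>W. \<Prod>e\<in>hedges d. if v \<in> e \<and> G e then (1/2) ^ k v else 1)" for G
    using Wc by (intro prod.cong refl vert_weight_pow_eq_prod) auto
  then have "measure_pmf.expectation (Qdp d p) (\<lambda>G. \<Prod>v\<in>W. vert_weight d G v ^ k v)
      = measure_pmf.expectation (Qdp d p) (\<lambda>G. \<Prod>e\<in>hedges d. g e (G e))"
    unfolding g_def by (simp add: prod.swap[of _ W])
  also have "\<dots> = (\<Prod>e\<in>hedges d. measure_pmf.expectation (bernoulli_pmf p) (g e))"
    unfolding Qdp_def
    by (rule expectation_prod_Pi_pmf)
       (auto simp: g_def intro!: prod_nonneg integrable_measure_pmf_finite)
  also have "\<dots> = (\<Prod>e\<in>hedges d. \<Prod>v\<in>W. if v \<in> e then bernoulli_half_pow_mean p (k v) else 1)"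
    unfolding g_def bernoulli_half_pow_mean_def
    using finW cube_indep_inter_hedge[OF W] p by (intro prod.cong refl expectation_bernoulli_prod_if)
  also have "\<dots> = (\<Prod>v\<in>W. \<Prod>e\<in>hedges d. if v \<in> e then bernoulli_half_pow_mean p (k v) else 1)"
    by (rule prod.swap)
  also have "\<dots> = (\<Prod>v\<in>W. bernoulli_half_pow_mean p (k v) ^ d)"
    using Wc by (intro prod.cong refl) (auto simp: prod.If_cases Int_def card_hedges_at)
  finally show ?thesis .
qed

section \<open>Deterministic bounds on the good sum\<close>

lemma prod_one_plus_eq_sum_Pow:
  fixes x :: "'a \<Rightarrow> real"
  shows "finite V \<Longrightarrow> (\<Prod>v\<in>V. 1 + x v) = (\<Sum>S\<in>Pow V. \<Prod>v\<in>S. x v)"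
  using prod_add[of V x "\<lambda>_. 1"] by (simp add: add.commute)

lemma sum_Pow_card_gt_le:
  fixes x :: "'a \<Rightarrow> real"
  assumes fin: "finite V" and x: "\<And>v. 0 \<le> x v"
  shows "(\<Sum>S\<in>Pow V. of_bool (M < real (card S)) * (\<Prod>v\<in>S. x v))
       \<le> exp (- M) * exp (exp 1 * (\<Sum>v\<in>V. x v))"
proof -
  have "of_bool (M < real (card S)) * (\<Prod>v\<in>S. x v) \<le> exp (- M) * (\<Prod>v\<in>S. exp 1 * x v)" for S
  proof -
    have "of_bool (M < real (card S)) \<le> exp (real (card S) - M)"
      by auto
    moreover have "exp (- M) * (\<Prod>v\<in>S. exp 1 * x v) = exp (real (card S) - M) * (\<Prod>v\<in>S. x v)"
      by (simp add: prod.distrib exp_diff exp_minus field_simps flip: exp_of_nat_mult)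
    ultimately show ?thesis
      by (simp add: mult_right_mono prod_nonneg x)
  qed
  then have "(\<Sum>S\<in>Pow V. of_bool (M < real (card S)) * (\<Prod>v\<in>S. x v))
      \<le> exp (- M) * (\<Sum>S\<in>Pow V. \<Prod>v\<in>S. exp 1 * x v)"
    by (simp add: sum_distrib_left sum_mono)
  also have "\<dots> = exp (- M) * (\<Prod>v\<in>V. 1 + exp 1 * x v)"
    by (simp add: prod_one_plus_eq_sum_Pow[OF fin])
  also have "\<dots> \<le> exp (- M) * (\<Prod>v\<in>V. exp (exp 1 * x v))"
    using x by (intro mult_left_mono prod_mono) (auto intro: add_nonneg_nonneg)
  also have "\<dots> = exp (- M) * exp (exp 1 * (\<Sum>v\<in>V. x v))"
    by (simp add: exp_sum[OF fin] sum_distrib_left)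
  finally show ?thesis .
qed

lemma sum_Pow_pair_le:
  fixes x :: "'a \<Rightarrow> real"
  assumes fin: "finite V" and uv: "u \<in> V" "v \<in> V" "u \<noteq> v" and x: "\<And>w. 0 \<le> x w"
  shows "(\<Sum>S\<in>Pow V. of_bool (u \<in> S \<and> v \<in> S) * (\<Prod>w\<in>S. x w)) \<le> x u * x v * (\<Prod>w\<in>V. 1 + x w)"
proof -
  define g :: "'a \<Rightarrow> real" where "g w = of_bool (w \<noteq> u \<and> w \<noteq> v)" for w
  have "(\<Sum>S\<in>Pow V. of_bool (u \<in> S \<and> v \<in> S) * (\<Prod>w\<in>S. x w))
      = (\<Sum>S\<in>Pow V. (\<Prod>w\<in>S. x w) * (\<Prod>w\<in>V - S. g w))"
  proof (rule sum.cong[OF refl])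
    fix S assume "S \<in> Pow V"
    have "(\<Prod>w\<in>V - S. g w) = of_bool (u \<in> S \<and> v \<in> S)"
      using fin uv by (auto simp: g_def prod_zero_iff intro!: prod.neutral)
    then show "of_bool (u \<in> S \<and> v \<in> S) * (\<Prod>w\<in>S. x w) = (\<Prod>w\<in>S. x w) * (\<Prod>w\<in>V - S. g w)"
      by simp
  qed
  also have "\<dots> = (\<Prod>w\<in>V. x w + g w)"
    by (rule prod_add[OF fin, symmetric])
  also have "\<dots> \<le> (\<Prod>w\<in>V. (if w = u \<or> w = v then x w else 1) * (1 + x w))"
    using x by (intro prod_mono) (auto simp: g_def algebra_simps)
  also have "\<dots> = (\<Prod>w\<in>V. if w = u \<or> w = v then x w else 1) * (\<Prod>w\<in>V. 1 + x w)"
    by (rule prod.distrib)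
  also have "(\<Prod>w\<in>V. if w = u \<or> w = v then x w else 1) = x u * x v"
  proof -
    have "{w \<in> V. w = u \<or> w = v} = {u, v}"
      using uv by auto
    then show ?thesis
      using uv by (simp add: prod.inter_filter[OF fin, symmetric])
  qed
  finally show ?thesis .
qed

abbreviation good_bound :: "nat \<Rightarrow> real" where
  "good_bound d \<equiv> 2 ^ d / (real d)\<^sup>2"

lemma not_Good_le_indicators:
  assumes "finite V" "S \<subseteq> V" "S \<notin> Good d V"
  shows "1 \<le> of_bool (good_bound d < real (card S))
    + (\<Sum>u\<in>V. \<Sum>v\<in>{v \<in> V. two_nbrs d u v}. of_bool (u \<in> S \<and> v \<in> S) :: real)"
proof (cases "good_bound d < real (card S)")
  case True
  then show ?thesis
    by (simp add: sum_nonneg)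
next
  case False
  then obtain u v where uv: "u \<in> S" "v \<in> S" "two_nbrs d u v"
    using assms(2,3) unfolding Good_def by auto
  have "(1::real) = of_bool (u \<in> S \<and> v \<in> S)"
    using uv by simp
  also have "\<dots> \<le> (\<Sum>v\<in>{v \<in> V. two_nbrs d u v}. of_bool (u \<in> S \<and> v \<in> S))"
    using uv assms(1,2) by (intro member_le_sum) auto
  also have "\<dots> \<le> (\<Sum>u\<in>V. \<Sum>v\<in>{v \<in> V. two_nbrs d u v}. of_bool (u \<in> S \<and> v \<in> S))"
    using uv assms(1,2)
    by (intro member_le_sum[where f = "\<lambda>u. \<Sum>v\<in>{v \<in> V. two_nbrs d u v}. of_bool (u \<in> S \<and> v \<in> S)"])
      (auto intro: sum_nonneg)
  finally show ?thesis
    by simp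
qed

text \<open>The large sets are controlled by a Chernoff-type estimate, the sets containing two
  2-neighbours by a pair count.\<close>
lemma sum_Pow_diff_Good_le:
  fixes x :: "nat set \<Rightarrow> real"
  assumes fin: "finite V" and x: "\<And>v. 0 \<le> x v"
  shows "(\<Sum>S\<in>Pow V - Good d V. \<Prod>v\<in>S. x v)
       \<le> exp (- good_bound d) * exp (exp 1 * (\<Sum>v\<in>V. x v))
         + (\<Sum>u\<in>V. \<Sum>v\<in>{v \<in> V. two_nbrs d u v}. x u * x v) * (\<Prod>v\<in>V. 1 + x v)"
proof -
  define T where "T u = {v \<in> V. two_nbrs d u v}" for u
  define coef :: "nat set set \<Rightarrow> real" where "coef S = of_bool (good_bound d < real (card S))
      + (\<Sum>u\<in>V. \<Sum>v\<in>T u. of_bool (u \<in> S \<and> v \<in> S))" for S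
  have prod_x_nonneg: "0 \<le> (\<Prod>v\<in>S. x v)" for S
    using x by (simp add: prod_nonneg)
  have "(\<Prod>v\<in>S. x v) \<le> coef S * (\<Prod>v\<in>S. x v)" if "S \<in> Pow V - Good d V" for S
  proof -
    have "1 \<le> coef S"
      using not_Good_le_indicators[OF fin, of S] that unfolding coef_def T_def by blast
    then show ?thesis
      using mult_right_mono[OF _ prod_x_nonneg] by fastforce
  qed
  then have "(\<Sum>S\<in>Pow V - Good d V. \<Prod>v\<in>S. x v) \<le> (\<Sum>S\<in>Pow V - Good d V. coef S * (\<Prod>v\<in>S. x v))"
    by (rule sum_mono)
  also have "\<dots> \<le> (\<Sum>S\<in>Pow V. coef S * (\<Prod>v\<in>S. x v))"
  proof (intro sum_mono2)
    show "0 \<le> coef S * (\<Prod>v\<in>S. x v)" for S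
      unfolding coef_def using prod_x_nonneg by (intro mult_nonneg_nonneg add_nonneg_nonneg sum_nonneg) auto
  qed (use fin in auto)
  also have "\<dots> = (\<Sum>S\<in>Pow V. of_bool (good_bound d < real (card S)) * (\<Prod>v\<in>S. x v))
      + (\<Sum>u\<in>V. \<Sum>v\<in>T u. \<Sum>S\<in>Pow V. of_bool (u \<in> S \<and> v \<in> S) * (\<Prod>w\<in>S. x w))"
    unfolding coef_def
    by (simp add: distrib_right sum.distrib sum_distrib_right sum.swap[of _ "Pow V"])
  also have "\<dots> \<le> exp (- good_bound d) * exp (exp 1 * (\<Sum>v\<in>V. x v))
      + (\<Sum>u\<in>V. \<Sum>v\<in>T u. x u * x v * (\<Prod>w\<in>V. 1 + x w))"
    using fin x by (intro add_mono sum_Pow_card_gt_le sum_mono sum_Pow_pair_le)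
      (auto simp: T_def two_nbrs_def)
  finally show ?thesis
    unfolding T_def by (simp add: sum_distrib_right)
qed

lemma ln_one_plus_ge: "0 \<le> (x::real) \<Longrightarrow> x - x\<^sup>2 / 2 \<le> ln (1 + x)"
proof -
  assume x: "0 \<le> x"
  define f where "f t = ln (1 + t) - t + t\<^sup>2 / 2" for t :: real
  have "f 0 \<le> f x"
  proof (rule DERIV_nonneg_imp_nondecreasing[OF x])
    fix t :: real assume t: "0 \<le> t" "t \<le> x"
    have "(f has_real_derivative (1 / (1 + t) - 1 + t)) (at t)"
      unfolding f_def using t by (auto intro!: derivative_eq_intros)
    moreover have "1 / (1 + t) - 1 + t = t\<^sup>2 / (1 + t)"
      using t by (simp add: field_simps power2_eq_square)
    ultimately show "\<exists>y. (f has_real_derivative y) (at t) \<and> 0 \<le> y"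
      using t by auto
  qed
  then show ?thesis
    unfolding f_def by simp
qed

lemma ln_one_plus_le: "0 \<le> (x::real) \<Longrightarrow> ln (1 + x) \<le> x - x\<^sup>2 / 2 + x ^ 3 / 3"
proof -
  assume x: "0 \<le> x"
  define f where "f t = t - t\<^sup>2 / 2 + t ^ 3 / 3 - ln (1 + t)" for t :: real
  have "f 0 \<le> f x"
  proof (rule DERIV_nonneg_imp_nondecreasing[OF x])
    fix t :: real assume t: "0 \<le> t" "t \<le> x"
    have "(f has_real_derivative (1 - t + t\<^sup>2 - 1 / (1 + t))) (at t)"
      unfolding f_def using t by (auto intro!: derivative_eq_intros simp: power2_eq_square)
    moreover have "1 - t + t\<^sup>2 - 1 / (1 + t) = t ^ 3 / (1 + t)"
      using t by (simp add: field_simps power2_eq_square power3_eq_cube)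
    ultimately show "\<exists>y. (f has_real_derivative y) (at t) \<and> 0 \<le> y"
      using t by auto
  qed
  then show ?thesis
    unfolding f_def by simp
qed

lemma prod_one_plus_bounds:
  fixes x :: "'a \<Rightarrow> real"
  assumes fin: "finite V" and x: "\<And>v. 0 \<le> x v"
  shows "exp ((\<Sum>v\<in>V. x v) - (\<Sum>v\<in>V. x v ^ 2) / 2) \<le> (\<Prod>v\<in>V. 1 + x v)"
    and "(\<Prod>v\<in>V. 1 + x v) \<le> exp ((\<Sum>v\<in>V. x v) - (\<Sum>v\<in>V. x v ^ 2) / 2 + (\<Sum>v\<in>V. x v ^ 3) / 3)"
    and "(\<Prod>v\<in>V. 1 + x v) \<le> exp (\<Sum>v\<in>V. x v)"
proof -
  have pos: "0 < 1 + x v" for v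
    using x[of v] by simp
  have "exp ((\<Sum>v\<in>V. x v) - (\<Sum>v\<in>V. x v ^ 2) / 2) = (\<Prod>v\<in>V. exp (x v - x v ^ 2 / 2))"
    by (simp add: exp_sum[OF fin, symmetric] sum_subtractf sum_divide_distrib)
  also have "\<dots> \<le> (\<Prod>v\<in>V. 1 + x v)"
    using x ln_one_plus_ge pos by (intro prod_mono) (auto simp: ln_ge_iff)
  finally show "exp ((\<Sum>v\<in>V. x v) - (\<Sum>v\<in>V. x v ^ 2) / 2) \<le> (\<Prod>v\<in>V. 1 + x v)" .
  have "1 + x v \<le> exp (x v - x v ^ 2 / 2 + x v ^ 3 / 3)" for v
    using ln_one_plus_le[OF x[of v]] pos[of v] by (metis exp_le_cancel_iff exp_ln)
  then have "(\<Prod>v\<in>V. 1 + x v) \<le> (\<Prod>v\<in>V. exp (x v - x v ^ 2 / 2 + x v ^ 3 / 3))"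
    using pos by (intro prod_mono) (simp add: order.strict_implies_order)
  also have "\<dots> = exp ((\<Sum>v\<in>V. x v) - (\<Sum>v\<in>V. x v ^ 2) / 2 + (\<Sum>v\<in>V. x v ^ 3) / 3)"
    by (simp add: exp_sum[OF fin, symmetric] sum.distrib sum_subtractf sum_divide_distrib)
  finally show "(\<Prod>v\<in>V. 1 + x v) \<le> exp ((\<Sum>v\<in>V. x v) - (\<Sum>v\<in>V. x v ^ 2) / 2 + (\<Sum>v\<in>V. x v ^ 3) / 3)" .
  have "(\<Prod>v\<in>V. 1 + x v) \<le> (\<Prod>v\<in>V. exp (x v))"
    using x by (intro prod_mono) (auto intro: add_nonneg_nonneg)
  then show "(\<Prod>v\<in>V. 1 + x v) \<le> exp (\<Sum>v\<in>V. x v)"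
    by (simp add: exp_sum[OF fin])
qed

definition weight_pow_sum :: "nat \<Rightarrow> (nat set set \<Rightarrow> bool) \<Rightarrow> nat set set \<Rightarrow> nat \<Rightarrow> real" where
  "weight_pow_sum d G V k = (\<Sum>v\<in>V. vert_weight d G v ^ k)"

definition two_nbr_weight :: "nat \<Rightarrow> (nat set set \<Rightarrow> bool) \<Rightarrow> nat set set \<Rightarrow> real" where
  "two_nbr_weight d G V =
     (\<Sum>u\<in>V. \<Sum>v\<in>{v \<in> V. two_nbrs d u v}. vert_weight d G u * vert_weight d G v)"

lemma Phi_eq_weight_pow_sum: "Phi d G V = weight_pow_sum d G V 1"
  by (simp add: weight_pow_sum_def Phi_eq_sum_vert_weight)

lemma weight_pow_sum_nonneg: "0 \<le> weight_pow_sum d G V k"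
  unfolding weight_pow_sum_def by (simp add: sum_nonneg vert_weight_nonneg)

lemma two_nbr_weight_nonneg: "0 \<le> two_nbr_weight d G V"
  unfolding two_nbr_weight_def by (simp add: sum_nonneg vert_weight_nonneg)

lemma weight_pow_sum_3_le_2: "weight_pow_sum d G V 3 \<le> weight_pow_sum d G V 2"
  unfolding weight_pow_sum_def
  by (intro sum_mono power_decreasing) (simp_all add: vert_weight_nonneg vert_weight_le_one)

lemma GoodSum_le_prod_one_plus:
  assumes "V \<subseteq> cube d"
  shows "GoodSum d G V \<le> (\<Prod>v\<in>V. 1 + vert_weight d G v)"
proof -
  have "finite V"
    using assms finite_cube finite_subset by blast
  moreover have "Good d V \<subseteq> Pow V"
    unfolding Good_def by auto
  ultimately show ?thesis
    unfolding GoodSum_eq_sum_prod_vert_weight[OF assms] prod_one_plus_eq_sum_Pow[OF \<open>finite V\<close>]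
    by (intro sum_mono2) (auto intro: prod_nonneg vert_weight_nonneg)
qed

lemma prod_one_plus_sub_GoodSum_le:
  assumes "V \<subseteq> cube d"
  shows "(\<Prod>v\<in>V. 1 + vert_weight d G v) - GoodSum d G V
    \<le> exp (- good_bound d) * exp (exp 1 * Phi d G V) + two_nbr_weight d G V * (\<Prod>v\<in>V. 1 + vert_weight d G v)"
proof -
  have fin: "finite V"
    using assms finite_cube finite_subset by blast
  have "Good d V \<subseteq> Pow V"
    unfolding Good_def by auto
  then have "(\<Prod>v\<in>V. 1 + vert_weight d G v) - GoodSum d G V
      = (\<Sum>S\<in>Pow V - Good d V. \<Prod>v\<in>S. vert_weight d G v)"
    unfolding GoodSum_eq_sum_prod_vert_weight[OF assms] prod_one_plus_eq_sum_Pow[OF fin]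
    using fin by (simp add: sum_diff)
  also have "\<dots> \<le> exp (- good_bound d) * exp (exp 1 * Phi d G V)
      + two_nbr_weight d G V * (\<Prod>v\<in>V. 1 + vert_weight d G v)"
    using sum_Pow_diff_Good_le[OF fin vert_weight_nonneg]
    unfolding Phi_eq_sum_vert_weight two_nbr_weight_def .
  finally show ?thesis .
qed

lemma GoodSum_div_exp_Phi_bounds:
  fixes G :: "nat set set \<Rightarrow> bool"
  assumes "V \<subseteq> cube d"
  defines "Q \<equiv> weight_pow_sum d G V 2" and "C \<equiv> weight_pow_sum d G V 3"
  shows "GoodSum d G V / exp (Phi d G V) \<le> exp (- Q / 2 + C / 3)"
    and "exp (- Q / 2) - two_nbr_weight d G V - exp (- good_bound d + (exp 1 - 1) * Phi d G V)
         \<le> GoodSum d G V / exp (Phi d G V)"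
proof -
  define P where "P = (\<Prod>v\<in>V. 1 + vert_weight d G v)"
  have fin: "finite V"
    using assms(1) finite_cube finite_subset by blast
  have P_bounds: "exp (Phi d G V - Q / 2) \<le> P" "P \<le> exp (Phi d G V - Q / 2 + C / 3)"
    "P \<le> exp (Phi d G V)"
    using prod_one_plus_bounds[of V "vert_weight d G", OF fin vert_weight_nonneg]
    unfolding P_def Q_def C_def weight_pow_sum_def Phi_eq_sum_vert_weight by simp_all
  have "GoodSum d G V \<le> exp (Phi d G V - Q / 2 + C / 3)"
    using GoodSum_le_prod_one_plus[OF assms(1), of G] P_bounds(2) unfolding P_def by (rule order_trans)
  then have "GoodSum d G V \<le> exp (- Q / 2 + C / 3) * exp (Phi d G V)"
    by (simp add: exp_add[symmetric] algebra_simps)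
  then show "GoodSum d G V / exp (Phi d G V) \<le> exp (- Q / 2 + C / 3)"
    by (simp add: divide_le_eq)
  have "two_nbr_weight d G V * P \<le> two_nbr_weight d G V * exp (Phi d G V)"
    using P_bounds(3) two_nbr_weight_nonneg by (rule mult_left_mono)
  then have "exp (Phi d G V - Q / 2) - two_nbr_weight d G V * exp (Phi d G V)
      - exp (- good_bound d) * exp (exp 1 * Phi d G V) \<le> GoodSum d G V"
    using prod_one_plus_sub_GoodSum_le[OF assms(1), of G] P_bounds(1) unfolding P_def by linarith
  moreover have "exp (Phi d G V - Q / 2) - two_nbr_weight d G V * exp (Phi d G V)
      - exp (- good_bound d) * exp (exp 1 * Phi d G V)
      = exp (Phi d G V) * (exp (- Q / 2) - two_nbr_weight d G V
        - exp (- good_bound d + (exp 1 - 1) * Phi d G V))"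
    by (simp add: algebra_simps flip: exp_add)
  ultimately show "exp (- Q / 2) - two_nbr_weight d G V - exp (- good_bound d + (exp 1 - 1) * Phi d G V)
      \<le> GoodSum d G V / exp (Phi d G V)"
    by (simp add: le_divide_eq mult.commute)
qed

lemma abs_exp_diff_le:
  fixes a b :: real
  assumes "a \<le> 0" "b \<le> 0"
  shows "\<bar>exp a - exp b\<bar> \<le> \<bar>a - b\<bar>"
proof -
  have "exp a - exp b \<le> a - b" if "b \<le> a" "a \<le> 0" for a b :: real
  proof -
    have "exp a - exp b = exp a * (1 - exp (b - a))"
      by (simp add: algebra_simps exp_diff)
    also have "\<dots> \<le> 1 * (a - b)"
    proof (rule mult_mono)
      show "1 - exp (b - a) \<le> a - b"
        using exp_ge_add_one_self[of "b - a"] by linarith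
    qed (use that in auto)
    finally show ?thesis
      by simp
  qed
  from this[of a b] this[of b a] assms show ?thesis
    by (cases "b \<le> a") auto
qed

text \<open>On the event \<open>\<Phi> \<le> M/4\<close>, the error term \<open>e^{-M+(e-1)\<Phi>}\<close> is at most \<open>e^{-M/2}\<close>.\<close>
lemma GoodSum_div_exp_Phi_approx:
  fixes G :: "nat set set \<Rightarrow> bool"
  assumes "V \<subseteq> cube d" and "Phi d G V \<le> good_bound d / 4" and "0 \<le> s"
  defines "Q \<equiv> weight_pow_sum d G V 2" and "C \<equiv> weight_pow_sum d G V 3"
  shows "\<bar>GoodSum d G V / exp (Phi d G V) - exp (- s / 2)\<bar>
         \<le> \<bar>Q - s\<bar> / 2 + C / 3 + two_nbr_weight d G V + exp (- good_bound d / 2)"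
proof -
  have "0 \<le> Phi d G V" "0 \<le> C" "C \<le> Q" "0 \<le> two_nbr_weight d G V"
    unfolding Phi_eq_weight_pow_sum Q_def C_def
    by (simp_all add: weight_pow_sum_nonneg weight_pow_sum_3_le_2 two_nbr_weight_nonneg)
  have "(exp 1 - 1) * Phi d G V \<le> 2 * Phi d G V"
    using exp_le \<open>0 \<le> Phi d G V\<close> by (intro mult_right_mono) auto
  then have tail: "exp (- good_bound d + (exp 1 - 1) * Phi d G V) \<le> exp (- good_bound d / 2)"
    using assms(2) by simp
  have "- Q / 2 + C / 3 \<le> 0" "- Q / 2 \<le> 0" "- s / 2 \<le> 0"
    using \<open>0 \<le> C\<close> \<open>C \<le> Q\<close> assms(3) by linarith+
  have "\<bar>(- Q / 2 + C / 3) - (- s / 2)\<bar> \<le> \<bar>Q - s\<bar> / 2 + C / 3"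
    using \<open>0 \<le> C\<close> by (auto simp: field_simps split: abs_split)
  then have up: "exp (- Q / 2 + C / 3) - exp (- s / 2) \<le> \<bar>Q - s\<bar> / 2 + C / 3"
    using abs_exp_diff_le[OF \<open>- Q / 2 + C / 3 \<le> 0\<close> \<open>- s / 2 \<le> 0\<close>]
      abs_ge_self[of "exp (- Q / 2 + C / 3) - exp (- s / 2)"] by linarith
  have "\<bar>(- Q / 2) - (- s / 2)\<bar> = \<bar>Q - s\<bar> / 2"
    by (auto simp: field_simps split: abs_split)
  then have low: "exp (- s / 2) - exp (- Q / 2) \<le> \<bar>Q - s\<bar> / 2"
    using abs_exp_diff_le[OF \<open>- Q / 2 \<le> 0\<close> \<open>- s / 2 \<le> 0\<close>]
      abs_ge_minus_self[of "exp (- Q / 2) - exp (- s / 2)"] by linarith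
  show ?thesis
    using GoodSum_div_exp_Phi_bounds[OF assms(1), of G] up low tail \<open>0 \<le> C\<close>
      \<open>0 \<le> two_nbr_weight d G V\<close> exp_ge_zero[of "- good_bound d / 2"]
    unfolding Q_def C_def abs_le_iff by (intro conjI) linarith+
qed

section \<open>Convergence in probability\<close>

definition tendsto_in_prob_zero :: "(nat \<Rightarrow> 'a pmf) \<Rightarrow> (nat \<Rightarrow> 'a \<Rightarrow> real) \<Rightarrow> bool" where
  "tendsto_in_prob_zero M X \<longleftrightarrow>
     (\<forall>\<epsilon>>0. (\<lambda>n. measure_pmf.prob (M n) {\<omega>. \<epsilon> < \<bar>X n \<omega>\<bar>}) \<longlonglongrightarrow> 0)"

definition bounded_in_prob :: "(nat \<Rightarrow> 'a pmf) \<Rightarrow> (nat \<Rightarrow> 'a \<Rightarrow> real) \<Rightarrow> bool" where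
  "bounded_in_prob M X \<longleftrightarrow>
     (\<forall>\<eta>>0. \<exists>K>0. \<forall>\<^sub>F n in sequentially. measure_pmf.prob (M n) {\<omega>. K < \<bar>X n \<omega>\<bar>} \<le> \<eta>)"

lemma prob_gt_le_expectation:
  assumes "integrable (measure_pmf M) X" "\<And>\<omega>. 0 \<le> X \<omega>" "0 < c"
  shows "measure_pmf.prob M {\<omega>. c < X \<omega>} \<le> measure_pmf.expectation M X / c"
proof -
  have "measure_pmf.prob M {\<omega>. c < X \<omega>} \<le> measure_pmf.prob M {\<omega> \<in> space (measure_pmf M). c \<le> X \<omega>}"
    by (intro measure_pmf.finite_measure_mono) auto
  also have "\<dots> \<le> measure_pmf.expectation M X / c"
    using assms by (intro integral_Markov_inequality_measure[where A = UNIV]) auto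
  finally show ?thesis .
qed

lemma prob_abs_gt_le_second_moment:
  assumes "integrable (measure_pmf M) (\<lambda>\<omega>. X \<omega> ^ 2)" "0 < c"
  shows "measure_pmf.prob M {\<omega>. c < \<bar>X \<omega>\<bar>} \<le> measure_pmf.expectation M (\<lambda>\<omega>. X \<omega> ^ 2) / c\<^sup>2"
proof -
  have "measure_pmf.prob M {\<omega>. c < \<bar>X \<omega>\<bar>} \<le> measure_pmf.prob M {\<omega> \<in> space (measure_pmf M). c \<le> \<bar>X \<omega>\<bar>}"
    by (intro measure_pmf.finite_measure_mono) auto
  also have "\<dots> \<le> measure_pmf.expectation M (\<lambda>\<omega>. X \<omega> ^ 2) / c\<^sup>2"
    using assms by (intro measure_pmf.second_moment_method) auto
  finally show ?thesis .
qed

lemma tendsto_zero_if_eventually_le_plus: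
  fixes f :: "nat \<Rightarrow> real"
  assumes "\<And>n. 0 \<le> f n"
    and "\<And>\<eta>. 0 < \<eta> \<Longrightarrow> \<exists>g. g \<longlonglongrightarrow> 0 \<and> (\<forall>\<^sub>F n in sequentially. f n \<le> \<eta> + g n)"
  shows "f \<longlonglongrightarrow> 0"
proof (rule order_tendstoI)
  fix a :: real assume "a < 0"
  then show "\<forall>\<^sub>F n in sequentially. a < f n"
    using assms(1) by (auto intro!: always_eventually less_le_trans[OF \<open>a < 0\<close>])
next
  fix a :: real assume "0 < a"
  then obtain g where g: "g \<longlonglongrightarrow> 0" and le: "\<forall>\<^sub>F n in sequentially. f n \<le> a / 2 + g n"
    using assms(2)[of "a / 2"] by auto
  have "\<forall>\<^sub>F n in sequentially. g n < a / 2"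
    using order_tendstoD(2)[OF g half_gt_zero[OF \<open>0 < a\<close>]] .
  with le show "\<forall>\<^sub>F n in sequentially. f n < a"
    by eventually_elim simp
qed

lemma tendsto_in_prob_zeroI_expectation:
  assumes "\<And>n \<omega>. 0 \<le> X n \<omega>" and "\<And>n. integrable (measure_pmf (M n)) (X n)"
    and "\<forall>\<^sub>F n in sequentially. measure_pmf.expectation (M n) (X n) \<le> b n" and "b \<longlonglongrightarrow> 0"
  shows "tendsto_in_prob_zero M X"
  unfolding tendsto_in_prob_zero_def
proof (intro allI impI)
  fix \<epsilon> :: real assume "0 < \<epsilon>"
  show "(\<lambda>n. measure_pmf.prob (M n) {\<omega>. \<epsilon> < \<bar>X n \<omega>\<bar>}) \<longlonglongrightarrow> 0"
  proof (rule Lim_null_comparison)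
    show "\<forall>\<^sub>F n in sequentially. norm (measure_pmf.prob (M n) {\<omega>. \<epsilon> < \<bar>X n \<omega>\<bar>}) \<le> b n / \<epsilon>"
      using assms(3)
    proof eventually_elim
      case (elim n)
      have "measure_pmf.prob (M n) {\<omega>. \<epsilon> < \<bar>X n \<omega>\<bar>} \<le> measure_pmf.expectation (M n) (X n) / \<epsilon>"
        using prob_gt_le_expectation[OF assms(2) assms(1) \<open>0 < \<epsilon>\<close>] assms(1) by simp
      also have "\<dots> \<le> b n / \<epsilon>"
        using elim \<open>0 < \<epsilon>\<close> by (simp add: divide_right_mono)
      finally show ?case
        by simp
    qed
    show "(\<lambda>n. b n / \<epsilon>) \<longlonglongrightarrow> 0"
      using tendsto_divide_zero[OF assms(4)] .
  qed
qed

lemma tendsto_in_prob_zeroI_second_moment: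
  assumes "\<And>n. integrable (measure_pmf (M n)) (\<lambda>\<omega>. X n \<omega> ^ 2)"
    and "\<forall>\<^sub>F n in sequentially. measure_pmf.expectation (M n) (\<lambda>\<omega>. X n \<omega> ^ 2) \<le> b n"
    and "b \<longlonglongrightarrow> 0"
  shows "tendsto_in_prob_zero M X"
proof -
  have "tendsto_in_prob_zero M (\<lambda>n \<omega>. X n \<omega> ^ 2)"
    using assms by (intro tendsto_in_prob_zeroI_expectation) auto
  moreover have "\<epsilon> < \<bar>x\<bar> \<longleftrightarrow> \<epsilon>\<^sup>2 < \<bar>x ^ 2\<bar>" if "0 < \<epsilon>" for \<epsilon> x :: real
    using abs_le_square_iff[of x \<epsilon>] that by (simp add: not_le[symmetric])
  ultimately show ?thesis
    unfolding tendsto_in_prob_zero_def by simp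
qed

lemma tendsto_in_prob_zero_const:
  assumes "c \<longlonglongrightarrow> 0"
  shows "tendsto_in_prob_zero M (\<lambda>n _. c n)"
  unfolding tendsto_in_prob_zero_def
proof (intro allI impI)
  fix \<epsilon> :: real assume "0 < \<epsilon>"
  then have "\<forall>\<^sub>F n in sequentially. \<bar>c n\<bar> < \<epsilon>"
    using assms by (simp add: tendsto_iff order_tendstoD)
  then have "\<forall>\<^sub>F n in sequentially. measure_pmf.prob (M n) {\<omega>. \<epsilon> < \<bar>c n\<bar>} = 0"
    by eventually_elim auto
  then show "(\<lambda>n. measure_pmf.prob (M n) {\<omega>. \<epsilon> < \<bar>c n\<bar>}) \<longlonglongrightarrow> 0"
    by (rule tendsto_eventually)
qed

lemma tendsto_in_prob_zero_add:
  assumes "tendsto_in_prob_zero M X" "tendsto_in_prob_zero M Y"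
  shows "tendsto_in_prob_zero M (\<lambda>n \<omega>. X n \<omega> + Y n \<omega>)"
  unfolding tendsto_in_prob_zero_def
proof (intro allI impI)
  fix \<epsilon> :: real assume "0 < \<epsilon>"
  show "(\<lambda>n. measure_pmf.prob (M n) {\<omega>. \<epsilon> < \<bar>X n \<omega> + Y n \<omega>\<bar>}) \<longlonglongrightarrow> 0"
  proof (rule Lim_null_comparison)
    show "\<forall>\<^sub>F n in sequentially. norm (measure_pmf.prob (M n) {\<omega>. \<epsilon> < \<bar>X n \<omega> + Y n \<omega>\<bar>})
        \<le> measure_pmf.prob (M n) {\<omega>. \<epsilon> / 2 < \<bar>X n \<omega>\<bar>} + measure_pmf.prob (M n) {\<omega>. \<epsilon> / 2 < \<bar>Y n \<omega>\<bar>}"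
    proof (intro always_eventually allI)
      fix n
      have "measure_pmf.prob (M n) {\<omega>. \<epsilon> < \<bar>X n \<omega> + Y n \<omega>\<bar>}
          \<le> measure_pmf.prob (M n) ({\<omega>. \<epsilon> / 2 < \<bar>X n \<omega>\<bar>} \<union> {\<omega>. \<epsilon> / 2 < \<bar>Y n \<omega>\<bar>})"
        by (intro measure_pmf.finite_measure_mono) auto
      also have "\<dots> \<le> measure_pmf.prob (M n) {\<omega>. \<epsilon> / 2 < \<bar>X n \<omega>\<bar>}
          + measure_pmf.prob (M n) {\<omega>. \<epsilon> / 2 < \<bar>Y n \<omega>\<bar>}"
        by (rule measure_Un_le) auto
      finally show "norm (measure_pmf.prob (M n) {\<omega>. \<epsilon> < \<bar>X n \<omega> + Y n \<omega>\<bar>})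
          \<le> measure_pmf.prob (M n) {\<omega>. \<epsilon> / 2 < \<bar>X n \<omega>\<bar>} + measure_pmf.prob (M n) {\<omega>. \<epsilon> / 2 < \<bar>Y n \<omega>\<bar>}"
        by simp
    qed
    show "(\<lambda>n. measure_pmf.prob (M n) {\<omega>. \<epsilon> / 2 < \<bar>X n \<omega>\<bar>}
        + measure_pmf.prob (M n) {\<omega>. \<epsilon> / 2 < \<bar>Y n \<omega>\<bar>}) \<longlonglongrightarrow> 0"
      using assms half_gt_zero[OF \<open>0 < \<epsilon>\<close>] unfolding tendsto_in_prob_zero_def
      by (intro tendsto_add_zero) (simp_all only:)
  qed
qed

lemma tendsto_in_prob_zero_dominated:
  assumes "tendsto_in_prob_zero M X" and "(\<lambda>n. measure_pmf.prob (M n) (E n)) \<longlonglongrightarrow> 0" and "0 < c"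
    and "\<forall>\<^sub>F n in sequentially. \<forall>\<omega>. \<omega> \<notin> E n \<longrightarrow> \<bar>Y n \<omega>\<bar> \<le> c * \<bar>X n \<omega>\<bar>"
  shows "tendsto_in_prob_zero M Y"
  unfolding tendsto_in_prob_zero_def
proof (intro allI impI)
  fix \<epsilon> :: real assume "0 < \<epsilon>"
  show "(\<lambda>n. measure_pmf.prob (M n) {\<omega>. \<epsilon> < \<bar>Y n \<omega>\<bar>}) \<longlonglongrightarrow> 0"
  proof (rule Lim_null_comparison)
    show "\<forall>\<^sub>F n in sequentially. norm (measure_pmf.prob (M n) {\<omega>. \<epsilon> < \<bar>Y n \<omega>\<bar>})
        \<le> measure_pmf.prob (M n) (E n) + measure_pmf.prob (M n) {\<omega>. \<epsilon> / c < \<bar>X n \<omega>\<bar>}"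
      using assms(4)
    proof eventually_elim
      case (elim n)
      have "{\<omega>. \<epsilon> < \<bar>Y n \<omega>\<bar>} \<subseteq> E n \<union> {\<omega>. \<epsilon> / c < \<bar>X n \<omega>\<bar>}"
        using elim \<open>0 < c\<close> by (force simp: divide_less_eq mult.commute)
      then have "measure_pmf.prob (M n) {\<omega>. \<epsilon> < \<bar>Y n \<omega>\<bar>}
          \<le> measure_pmf.prob (M n) (E n \<union> {\<omega>. \<epsilon> / c < \<bar>X n \<omega>\<bar>})"
        by (intro measure_pmf.finite_measure_mono) auto
      also have "\<dots> \<le> measure_pmf.prob (M n) (E n) + measure_pmf.prob (M n) {\<omega>. \<epsilon> / c < \<bar>X n \<omega>\<bar>}"
        by (rule measure_Un_le) auto
      finally show ?case
        by simp
    qed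
    show "(\<lambda>n. measure_pmf.prob (M n) (E n) + measure_pmf.prob (M n) {\<omega>. \<epsilon> / c < \<bar>X n \<omega>\<bar>}) \<longlonglongrightarrow> 0"
      using assms(1,2) \<open>0 < \<epsilon>\<close> \<open>0 < c\<close> unfolding tendsto_in_prob_zero_def
      by (intro tendsto_add_zero) auto
  qed
qed

lemma tendsto_in_prob_zero_mult_bounded:
  assumes "tendsto_in_prob_zero M X" "bounded_in_prob M Y"
  shows "tendsto_in_prob_zero M (\<lambda>n \<omega>. X n \<omega> * Y n \<omega>)"
  unfolding tendsto_in_prob_zero_def
proof (intro allI impI)
  fix \<epsilon> :: real assume "0 < \<epsilon>"
  show "(\<lambda>n. measure_pmf.prob (M n) {\<omega>. \<epsilon> < \<bar>X n \<omega> * Y n \<omega>\<bar>}) \<longlonglongrightarrow> 0"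
  proof (rule tendsto_zero_if_eventually_le_plus)
    fix \<eta> :: real assume "0 < \<eta>"
    then obtain K where "0 < K"
      and K: "\<forall>\<^sub>F n in sequentially. measure_pmf.prob (M n) {\<omega>. K < \<bar>Y n \<omega>\<bar>} \<le> \<eta>"
      using assms(2) unfolding bounded_in_prob_def by blast
    define g where "g n = measure_pmf.prob (M n) {\<omega>. \<epsilon> / K < \<bar>X n \<omega>\<bar>}" for n
    have "g \<longlonglongrightarrow> 0"
      using assms(1) \<open>0 < \<epsilon>\<close> \<open>0 < K\<close> unfolding g_def tendsto_in_prob_zero_def by simp
    moreover have "\<forall>\<^sub>F n in sequentially. measure_pmf.prob (M n) {\<omega>. \<epsilon> < \<bar>X n \<omega> * Y n \<omega>\<bar>} \<le> \<eta> + g n"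
      using K
    proof eventually_elim
      case (elim n)
      have "{\<omega>. \<epsilon> < \<bar>X n \<omega> * Y n \<omega>\<bar>} \<subseteq> {\<omega>. K < \<bar>Y n \<omega>\<bar>} \<union> {\<omega>. \<epsilon> / K < \<bar>X n \<omega>\<bar>}"
      proof (rule subsetI, rule ccontr)
        fix \<omega> assume "\<omega> \<in> {\<omega>. \<epsilon> < \<bar>X n \<omega> * Y n \<omega>\<bar>}"
          and "\<omega> \<notin> {\<omega>. K < \<bar>Y n \<omega>\<bar>} \<union> {\<omega>. \<epsilon> / K < \<bar>X n \<omega>\<bar>}"
        then have "\<epsilon> < \<bar>X n \<omega> * Y n \<omega>\<bar>" "\<bar>X n \<omega>\<bar> \<le> \<epsilon> / K" "\<bar>Y n \<omega>\<bar> \<le> K"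
          by auto
        then show False
          using mult_mono[of "\<bar>X n \<omega>\<bar>" "\<epsilon> / K" "\<bar>Y n \<omega>\<bar>" K] \<open>0 < K\<close> \<open>0 < \<epsilon>\<close>
          by (simp add: abs_mult)
      qed
      then have "measure_pmf.prob (M n) {\<omega>. \<epsilon> < \<bar>X n \<omega> * Y n \<omega>\<bar>}
          \<le> measure_pmf.prob (M n) ({\<omega>. K < \<bar>Y n \<omega>\<bar>} \<union> {\<omega>. \<epsilon> / K < \<bar>X n \<omega>\<bar>})"
        by (intro measure_pmf.finite_measure_mono) auto
      also have "\<dots> \<le> measure_pmf.prob (M n) {\<omega>. K < \<bar>Y n \<omega>\<bar>} + g n"
        unfolding g_def by (rule measure_Un_le) auto
      finally show ?case
        using elim by linarith
    qed
    ultimately show "\<exists>g. g \<longlonglongrightarrow> 0 \<and> (\<forall>\<^sub>F n in sequentially.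
        measure_pmf.prob (M n) {\<omega>. \<epsilon> < \<bar>X n \<omega> * Y n \<omega>\<bar>} \<le> \<eta> + g n)"
      by blast
  qed simp
qed

lemma bounded_in_probI_second_moment:
  assumes "\<And>n. integrable (measure_pmf (M n)) (\<lambda>\<omega>. X n \<omega> ^ 2)"
    and "\<forall>\<^sub>F n in sequentially. measure_pmf.expectation (M n) (\<lambda>\<omega>. X n \<omega> ^ 2) \<le> c"
  shows "bounded_in_prob M X"
  unfolding bounded_in_prob_def
proof (intro allI impI)
  fix \<eta> :: real assume "0 < \<eta>"
  define K where "K = max 1 (\<bar>c\<bar> / \<eta>)"
  have K: "1 \<le> K" "\<bar>c\<bar> / \<eta> \<le> K"
    unfolding K_def by auto
  have "c / K\<^sup>2 \<le> \<eta>"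
  proof -
    have "c / K\<^sup>2 \<le> \<bar>c\<bar> / K"
      using K by (auto simp: power2_eq_square divide_le_eq intro: order_trans[OF abs_ge_self]
          mult_left_mono[of 1 K "\<bar>c\<bar>", simplified])
    also have "\<dots> \<le> \<eta>"
      using K \<open>0 < \<eta>\<close> by (simp add: divide_le_eq mult.commute)
    finally show ?thesis .
  qed
  have "\<forall>\<^sub>F n in sequentially. measure_pmf.prob (M n) {\<omega>. K < \<bar>X n \<omega>\<bar>} \<le> \<eta>"
    using assms(2)
  proof eventually_elim
    case (elim n)
    have "measure_pmf.prob (M n) {\<omega>. K < \<bar>X n \<omega>\<bar>} \<le> measure_pmf.expectation (M n) (\<lambda>\<omega>. X n \<omega> ^ 2) / K\<^sup>2"
      using K by (intro prob_abs_gt_le_second_moment assms(1)) auto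
    also have "\<dots> \<le> c / K\<^sup>2"
      using elim by (simp add: divide_right_mono)
    finally show ?case
      using \<open>c / K\<^sup>2 \<le> \<eta>\<close> by linarith
  qed
  moreover have "0 < K"
    using K(1) by linarith
  ultimately show "\<exists>K>0. \<forall>\<^sub>F n in sequentially. measure_pmf.prob (M n) {\<omega>. K < \<bar>X n \<omega>\<bar>} \<le> \<eta>"
    by blast
qed

lemma bounded_in_prob_exp:
  assumes "bounded_in_prob M X"
  shows "bounded_in_prob M (\<lambda>n \<omega>. exp (X n \<omega>))"
  unfolding bounded_in_prob_def
proof (intro allI impI)
  fix \<eta> :: real assume "0 < \<eta>"
  then obtain K where "0 < K"
    and K: "\<forall>\<^sub>F n in sequentially. measure_pmf.prob (M n) {\<omega>. K < \<bar>X n \<omega>\<bar>} \<le> \<eta>"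
    using assms unfolding bounded_in_prob_def by blast
  have "\<forall>\<^sub>F n in sequentially. measure_pmf.prob (M n) {\<omega>. exp K < \<bar>exp (X n \<omega>)\<bar>} \<le> \<eta>"
    using K
  proof eventually_elim
    case (elim n)
    have "measure_pmf.prob (M n) {\<omega>. exp K < \<bar>exp (X n \<omega>)\<bar>} \<le> measure_pmf.prob (M n) {\<omega>. K < \<bar>X n \<omega>\<bar>}"
      by (intro measure_pmf.finite_measure_mono) auto
    with elim show ?case
      by linarith
  qed
  then show "\<exists>K>0. \<forall>\<^sub>F n in sequentially. measure_pmf.prob (M n) {\<omega>. K < \<bar>exp (X n \<omega>)\<bar>} \<le> \<eta>"
    using exp_gt_zero by blast
qed

lemma expectation_sum_sq:
  fixes M :: "'a pmf" and f :: "'b \<Rightarrow> 'a \<Rightarrow> real"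
  assumes fin: "finite (set_pmf M)" "finite V"
    and uncorr: "\<And>u v. u \<in> V \<Longrightarrow> v \<in> V \<Longrightarrow> u \<noteq> v \<Longrightarrow>
      measure_pmf.expectation M (\<lambda>\<omega>. f u \<omega> * f v \<omega>) = a\<^sup>2"
    and sq: "\<And>u. u \<in> V \<Longrightarrow> measure_pmf.expectation M (\<lambda>\<omega>. f u \<omega> ^ 2) = b"
  shows "measure_pmf.expectation M (\<lambda>\<omega>. (\<Sum>v\<in>V. f v \<omega>)\<^sup>2)
    = real (card V) * (b + (real (card V) - 1) * a\<^sup>2)"
proof -
  have row: "(\<Sum>v\<in>V. measure_pmf.expectation M (\<lambda>\<omega>. f u \<omega> * f v \<omega>))
      = b + (real (card V) - 1) * a\<^sup>2" if u: "u \<in> V" for u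
  proof -
    have "(\<Sum>v\<in>V. measure_pmf.expectation M (\<lambda>\<omega>. f u \<omega> * f v \<omega>))
        = measure_pmf.expectation M (\<lambda>\<omega>. f u \<omega> ^ 2)
          + (\<Sum>v\<in>V - {u}. measure_pmf.expectation M (\<lambda>\<omega>. f u \<omega> * f v \<omega>))"
      using u fin(2) by (simp add: sum.remove power2_eq_square)
    also have "(\<Sum>v\<in>V - {u}. measure_pmf.expectation M (\<lambda>\<omega>. f u \<omega> * f v \<omega>)) = (\<Sum>v\<in>V - {u}. a\<^sup>2)"
      using u by (intro sum.cong refl uncorr) auto
    also have "\<dots> = (real (card V) - 1) * a\<^sup>2"
    proof -
      have "1 \<le> card V"
        using u fin(2) by (metis One_nat_def Suc_leI card_gt_0_iff empty_iff)
      then show ?thesis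
        using u fin(2) by (simp add: card_Diff_singleton of_nat_diff)
    qed
    finally show ?thesis
      using sq[OF u] by simp
  qed
  have "measure_pmf.expectation M (\<lambda>\<omega>. (\<Sum>v\<in>V. f v \<omega>)\<^sup>2)
      = (\<Sum>u\<in>V. \<Sum>v\<in>V. measure_pmf.expectation M (\<lambda>\<omega>. f u \<omega> * f v \<omega>))"
    by (simp add: power2_eq_square sum_product integrable_measure_pmf_finite[OF fin(1)])
  also have "\<dots> = (\<Sum>u\<in>V. b + (real (card V) - 1) * a\<^sup>2)"
    by (intro sum.cong refl row)
  finally show ?thesis
    by simp
qed

lemma expectation_sum_centered_sq_le:
  fixes M :: "'a pmf" and f :: "'b \<Rightarrow> 'a \<Rightarrow> real"
  assumes fin: "finite (set_pmf M)" "finite V"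
    and mean: "\<And>u. u \<in> V \<Longrightarrow> measure_pmf.expectation M (f u) = a"
    and uncorr: "\<And>u v. u \<in> V \<Longrightarrow> v \<in> V \<Longrightarrow> u \<noteq> v \<Longrightarrow>
      measure_pmf.expectation M (\<lambda>\<omega>. f u \<omega> * f v \<omega>) = a\<^sup>2"
    and sq: "\<And>u. u \<in> V \<Longrightarrow> measure_pmf.expectation M (\<lambda>\<omega>. f u \<omega> ^ 2) = b"
  shows "measure_pmf.expectation M (\<lambda>\<omega>. ((\<Sum>v\<in>V. f v \<omega>) - real (card V) * a)\<^sup>2) \<le> real (card V) * b"
proof -
  define n where "n = real (card V)"
  have int: "integrable M g" for g :: "'a \<Rightarrow> real"
    by (rule integrable_measure_pmf_finite[OF fin(1)])
  have "(\<lambda>\<omega>. ((\<Sum>v\<in>V. f v \<omega>) - n * a)\<^sup>2)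
      = (\<lambda>\<omega>. (\<Sum>v\<in>V. f v \<omega>)\<^sup>2 - 2 * (n * a) * (\<Sum>v\<in>V. f v \<omega>) + (n * a)\<^sup>2)"
    by (simp add: power2_diff algebra_simps)
  then have "measure_pmf.expectation M (\<lambda>\<omega>. ((\<Sum>v\<in>V. f v \<omega>) - n * a)\<^sup>2)
      = measure_pmf.expectation M (\<lambda>\<omega>. (\<Sum>v\<in>V. f v \<omega>)\<^sup>2)
        - 2 * (n * a) * measure_pmf.expectation M (\<lambda>\<omega>. \<Sum>v\<in>V. f v \<omega>) + (n * a)\<^sup>2"
    by (simp add: int del: integral_sum')
  also have "\<dots> = n * b - n * a\<^sup>2"
    using expectation_sum_sq[OF fin uncorr sq] mean
    by (simp add: int n_def algebra_simps power2_eq_square)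
  also have "\<dots> \<le> n * b"
    by (simp add: n_def)
  finally show ?thesis
    unfolding n_def .
qed

section \<open>Moments of the weight sums in \<open>Q_{d,p}\<close>\<close>

context
  fixes d :: nat and p :: real and V :: "nat set set"
  assumes indep: "cube_indep d V" and p: "0 \<le> p" "p \<le> 1"
begin

lemma expectation_vert_weight_pow:
  "v \<in> V \<Longrightarrow> measure_pmf.expectation (Qdp d p) (\<lambda>G. vert_weight d G v ^ k)
     = bernoulli_half_pow_mean p k ^ d"
  using expectation_prod_vert_weight_pow[OF cube_indep_subset[OF indep] p, of "{v}" "\<lambda>_. k"] by simp

lemma expectation_vert_weight_pow_pair:
  "u \<in> V \<Longrightarrow> v \<in> V \<Longrightarrow> u \<noteq> v \<Longrightarrow>
   measure_pmf.expectation (Qdp d p) (\<lambda>G. vert_weight d G u ^ k * vert_weight d G v ^ k)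
     = (bernoulli_half_pow_mean p k ^ d)\<^sup>2"
  using expectation_prod_vert_weight_pow[OF cube_indep_subset[OF indep] p, of "{u, v}" "\<lambda>_. k"]
  by (simp add: power2_eq_square)

lemma expectation_weight_pow_sum:
  "measure_pmf.expectation (Qdp d p) (\<lambda>G. weight_pow_sum d G V k)
     = real (card V) * bernoulli_half_pow_mean p k ^ d"
  by (simp add: weight_pow_sum_def expectation_vert_weight_pow)

lemma expectation_weight_pow_sum_centered_sq_le:
  "measure_pmf.expectation (Qdp d p)
     (\<lambda>G. (weight_pow_sum d G V k - real (card V) * bernoulli_half_pow_mean p k ^ d)\<^sup>2)
   \<le> real (card V) * bernoulli_half_pow_mean p (2 * k) ^ d"
  unfolding weight_pow_sum_def
proof (rule expectation_sum_centered_sq_le[OF finite_set_pmf_Qdp finite_cube_indep[OF indep]])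
  show "measure_pmf.expectation (Qdp d p) (\<lambda>G. (vert_weight d G u ^ k)\<^sup>2)
      = bernoulli_half_pow_mean p (2 * k) ^ d" if "u \<in> V" for u
    using expectation_vert_weight_pow[OF that, of "2 * k"] by (simp add: power_mult mult.commute)
qed (simp_all add: expectation_vert_weight_pow expectation_vert_weight_pow_pair)

lemma expectation_two_nbr_weight_le:
  "measure_pmf.expectation (Qdp d p) (\<lambda>G. two_nbr_weight d G V)
     \<le> real (card V) * (real d)\<^sup>2 * (bernoulli_half_pow_mean p 1 ^ d)\<^sup>2"
proof -
  have "measure_pmf.expectation (Qdp d p) (\<lambda>G. two_nbr_weight d G V)
      = (\<Sum>u\<in>V. real (card {v \<in> V. two_nbrs d u v}) * (bernoulli_half_pow_mean p 1 ^ d)\<^sup>2)"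
    using expectation_vert_weight_pow_pair[of _ _ 1]
    by (simp add: two_nbr_weight_def two_nbrs_def)
  also have "\<dots> \<le> (\<Sum>u\<in>V. (real d)\<^sup>2 * (bernoulli_half_pow_mean p 1 ^ d)\<^sup>2)"
  proof (intro sum_mono mult_right_mono)
    fix u assume "u \<in> V"
    then have "card {v \<in> V. two_nbrs d u v} \<le> d ^ 2"
      using indep card_two_nbrs_le unfolding cube_indep_def by blast
    then show "real (card {v \<in> V. two_nbrs d u v}) \<le> (real d)\<^sup>2"
      by (metis of_nat_le_iff of_nat_power)
  qed simp
  finally show ?thesis
    by simp
qed

end

section \<open>Asymptotics for \<open>2/3 \<le> p < 1\<close>\<close>

lemma sigma_p_eq: "sigma_p p d = sqrt (1/2) * sqrt ((4 - 3 * p) / 2) ^ d"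
  unfolding sigma_p_def by (simp only: real_sqrt_mult real_sqrt_power)

lemma half_card_mult_pow: "1 \<le> d \<Longrightarrow> real (2 ^ (d - 1)) * c ^ d = (1/2) * (2 * c) ^ d"
  by (cases d) (simp_all add: power_mult_distrib)

lemma tendsto_sq_mult_pow_zero:
  fixes \<theta> :: real
  assumes "0 \<le> \<theta>" "\<theta> < 1"
  shows "(\<lambda>d. (real d)\<^sup>2 * \<theta> ^ d) \<longlonglongrightarrow> 0"
proof -
  have "(\<lambda>d. real d * sqrt \<theta> ^ d) \<longlonglongrightarrow> 0"
    using assms by (intro powser_times_n_limit_0) (simp add: real_sqrt_lt_1_iff)
  then have "(\<lambda>d. (real d * sqrt \<theta> ^ d)\<^sup>2) \<longlonglongrightarrow> 0"
    by (metis tendsto_power zero_power2)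
  moreover have "(real d * sqrt \<theta> ^ d)\<^sup>2 = (real d)\<^sup>2 * \<theta> ^ d" for d
  proof -
    have "(sqrt \<theta> ^ d)\<^sup>2 = (sqrt \<theta> ^ 2) ^ d"
      by (metis power_mult mult.commute)
    then show ?thesis
      using assms(1) by (simp add: power_mult_distrib)
  qed
  ultimately show ?thesis
    by simp
qed

lemma sq_half_sq_two_minus_lt:
  fixes p :: real
  assumes "2/3 \<le> p" "p \<le> 1"
  shows "((2 - p)\<^sup>2 / 2)\<^sup>2 < (4 - 3 * p) / 2"
proof -
  define u where "u = 2 - p"
  have u: "1 \<le> u" "u \<le> 4/3"
    using assms by (auto simp: u_def)
  have "(u - 1) * (3 * u - 4) \<le> 0"
    using u by (intro mult_nonneg_nonpos) auto
  then have "3 * u\<^sup>2 \<le> 7 * u - 4"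
    by (simp add: power2_eq_square algebra_simps)
  moreover have "(u\<^sup>2)\<^sup>2 \<le> 16/9 * u\<^sup>2"
  proof -
    have "u\<^sup>2 \<le> 16/9"
      using mult_mono[of u "4/3" u "4/3"] u by (simp add: power2_eq_square)
    then have "u\<^sup>2 * u\<^sup>2 \<le> 16/9 * u\<^sup>2"
      by (rule mult_right_mono) simp
    then show ?thesis
      by (simp only: power2_eq_square[of "u\<^sup>2"])
  qed
  ultimately have "(u\<^sup>2)\<^sup>2 < 6 * u - 4"
    using u by linarith
  moreover have "((2 - p)\<^sup>2 / 2)\<^sup>2 = (u\<^sup>2)\<^sup>2 / 4" "(4 - 3 * p) / 2 = (6 * u - 4) / 4"
    by (simp_all add: u_def power_divide field_simps)
  ultimately show ?thesis
    by simp
qed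

lemma two_bernoulli_half_pow_mean:
  "2 * bernoulli_half_pow_mean p 1 = 2 - p"
  "2 * bernoulli_half_pow_mean p 2 = (4 - 3 * p) / 2"
  "2 * bernoulli_half_pow_mean p 3 = 2 - 7 * p / 4"
  "2 * bernoulli_half_pow_mean p 4 = 2 - 15 * p / 8"
  by (simp_all add: bernoulli_half_pow_mean_def field_simps)

context
  fixes p :: real and V :: "nat \<Rightarrow> nat set set"
  assumes p: "2/3 \<le> p" "p < 1"
    and indep: "\<And>d. cube_indep d (V d)"
    and card_V: "\<And>d. 1 \<le> d \<Longrightarrow> card (V d) = 2 ^ (d - 1)"
begin

lemma p_bounds: "0 \<le> p" "p \<le> 1"
  using p by auto

lemma variance_base_bounds: "1/2 < (4 - 3 * p) / 2" "(4 - 3 * p) / 2 \<le> 1"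
  using p by auto

lemma sigma_p_pos: "0 < sigma_p p d"
  using variance_base_bounds by (simp add: sigma_p_eq)

lemma sigma_p_le_one: "sigma_p p d \<le> 1"
  using variance_base_bounds by (simp add: sigma_p_eq power_le_one mult_le_one)

lemma sigma_p_sq: "(sigma_p p d)\<^sup>2 = (1/2) * ((4 - 3 * p) / 2) ^ d"
  unfolding sigma_p_def using variance_base_bounds by (subst real_sqrt_pow2) auto

lemma pow_div_sigma_p: "a ^ d / sigma_p p d = sqrt 2 * (a / sqrt ((4 - 3 * p) / 2)) ^ d"
  using variance_base_bounds by (simp add: sigma_p_eq power_divide real_sqrt_divide field_simps)

lemma card_V_mult_pow:
  assumes "1 \<le> d"
  shows "real (card (V d)) * bernoulli_half_pow_mean p k ^ d = (1/2) * (2 * bernoulli_half_pow_mean p k) ^ d"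
  by (simp only: card_V[OF assms] half_card_mult_pow[OF assms])

lemma card_V_mult_mean_1_eq_mu_p: "1 \<le> d \<Longrightarrow> real (card (V d)) * bernoulli_half_pow_mean p 1 ^ d = mu_p p d"
  by (simp only: card_V_mult_pow two_bernoulli_half_pow_mean mu_p_def)

lemma card_V_mult_mean_2_eq_sigma_p_sq: "1 \<le> d \<Longrightarrow> real (card (V d)) * bernoulli_half_pow_mean p 2 ^ d = (sigma_p p d)\<^sup>2"
  by (simp only: card_V_mult_pow sigma_p_sq two_bernoulli_half_pow_mean)

lemma Phi_centered_bounded_in_prob:
  "bounded_in_prob (\<lambda>d. Qdp d p) (\<lambda>d G. Phi d G (V d) - mu_p p d)"
proof (rule bounded_in_probI_second_moment[where c = "1/2"])
  show "\<forall>\<^sub>F d in sequentially. measure_pmf.expectation (Qdp d p) (\<lambda>G. (Phi d G (V d) - mu_p p d)\<^sup>2) \<le> 1/2"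
    using eventually_ge_at_top[of 1]
  proof eventually_elim
    case (elim d)
    have "measure_pmf.expectation (Qdp d p) (\<lambda>G. (Phi d G (V d) - mu_p p d)\<^sup>2) \<le> (sigma_p p d)\<^sup>2"
      using expectation_weight_pow_sum_centered_sq_le[OF indep[of d] p_bounds, of 1]
      unfolding Phi_eq_weight_pow_sum card_V_mult_mean_1_eq_mu_p[OF elim] mult_1_right card_V_mult_mean_2_eq_sigma_p_sq[OF elim] .
    also have "\<dots> \<le> 1/2"
      using variance_base_bounds by (simp add: sigma_p_sq power_le_one)
    finally show ?case .
  qed
qed simp

lemma expectation_Phi: "1 \<le> d \<Longrightarrow> measure_pmf.expectation (Qdp d p) (\<lambda>G. Phi d G (V d)) = mu_p p d"
  by (simp only: Phi_eq_weight_pow_sum expectation_weight_pow_sum[OF indep p_bounds]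
      card_V_mult_mean_1_eq_mu_p)

lemma expectation_weight_pow_sum_2_centered_sq_le:
  assumes "1 \<le> d"
  shows "measure_pmf.expectation (Qdp d p) (\<lambda>G. (weight_pow_sum d G (V d) 2 - (sigma_p p d)\<^sup>2)\<^sup>2)
    \<le> (1/2) * (2 - 15 * p / 8) ^ d"
proof -
  have "measure_pmf.expectation (Qdp d p)
      (\<lambda>G. (weight_pow_sum d G (V d) 2 - real (card (V d)) * bernoulli_half_pow_mean p 2 ^ d)\<^sup>2)
    \<le> real (card (V d)) * bernoulli_half_pow_mean p 4 ^ d"
    using expectation_weight_pow_sum_centered_sq_le[OF indep[of d] p_bounds, of 2] by simp
  then show ?thesis
    unfolding card_V_mult_mean_2_eq_sigma_p_sq[OF assms]
    by (simp only: card_V_mult_pow[OF assms] two_bernoulli_half_pow_mean)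
qed

lemma expectation_weight_pow_sum_3_le:
  assumes "1 \<le> d"
  shows "measure_pmf.expectation (Qdp d p) (\<lambda>G. weight_pow_sum d G (V d) 3)
    \<le> (1/2) * ((real d)\<^sup>2 * ((2 - p)\<^sup>2 / 2) ^ d)"
proof -
  have "measure_pmf.expectation (Qdp d p) (\<lambda>G. weight_pow_sum d G (V d) 3) = (1/2) * (2 - 7 * p / 4) ^ d"
    by (simp only: expectation_weight_pow_sum[OF indep p_bounds] card_V_mult_pow[OF assms]
        two_bernoulli_half_pow_mean)
  also have "(2 - 7 * p / 4) ^ d \<le> ((2 - p)\<^sup>2 / 2) ^ d"
    using p by (intro power_mono) (auto simp: power2_eq_square algebra_simps)
  also have "\<dots> \<le> (real d)\<^sup>2 * ((2 - p)\<^sup>2 / 2) ^ d"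
    using assms mult_right_mono[of 1 "(real d)\<^sup>2" "((2 - p)\<^sup>2 / 2) ^ d"] by simp
  finally show ?thesis
    by simp
qed

lemma expectation_two_nbr_weight_le_half:
  assumes "1 \<le> d"
  shows "measure_pmf.expectation (Qdp d p) (\<lambda>G. two_nbr_weight d G (V d))
    \<le> (1/2) * ((real d)\<^sup>2 * ((2 - p)\<^sup>2 / 2) ^ d)"
proof -
  have "2 * bernoulli_half_pow_mean p 1 ^ 2 = (2 - p)\<^sup>2 / 2"
    by (simp add: bernoulli_half_pow_mean_def power2_eq_square field_simps)
  then have card_mult: "real (card (V d)) * (bernoulli_half_pow_mean p 1 ^ 2) ^ d
      = (1/2) * ((2 - p)\<^sup>2 / 2) ^ d"
    by (simp only: card_V[OF assms] half_card_mult_pow[OF assms])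
  have "measure_pmf.expectation (Qdp d p) (\<lambda>G. two_nbr_weight d G (V d))
      \<le> real (card (V d)) * (real d)\<^sup>2 * (bernoulli_half_pow_mean p 1 ^ d)\<^sup>2"
    by (rule expectation_two_nbr_weight_le[OF indep p_bounds])
  also have "\<dots> = (real d)\<^sup>2 * (real (card (V d)) * (bernoulli_half_pow_mean p 1 ^ 2) ^ d)"
    by (simp add: power_mult[symmetric] mult.commute)
  finally show ?thesis
    unfolding card_mult by simp
qed

lemma weight_pow_sum_2_centered_tendsto:
  "tendsto_in_prob_zero (\<lambda>d. Qdp d p)
     (\<lambda>d G. \<bar>weight_pow_sum d G (V d) 2 - (sigma_p p d)\<^sup>2\<bar> / sigma_p p d)"
proof (rule tendsto_in_prob_zeroI_second_moment)
  define r where "r = (4 - 3 * p) / 2"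
  have "0 < r"
    using variance_base_bounds by (simp add: r_def)
  show "(\<lambda>d. ((2 - 15 * p / 8) / r) ^ d) \<longlonglongrightarrow> 0"
    using p by (intro LIMSEQ_power_zero) (auto simp: r_def field_simps)
  show "\<forall>\<^sub>F d in sequentially. measure_pmf.expectation (Qdp d p)
      (\<lambda>G. (\<bar>weight_pow_sum d G (V d) 2 - (sigma_p p d)\<^sup>2\<bar> / sigma_p p d)\<^sup>2) \<le> ((2 - 15 * p / 8) / r) ^ d"
    using eventually_ge_at_top[of 1]
  proof eventually_elim
    case (elim d)
    have "measure_pmf.expectation (Qdp d p)
        (\<lambda>G. (\<bar>weight_pow_sum d G (V d) 2 - (sigma_p p d)\<^sup>2\<bar> / sigma_p p d)\<^sup>2)
      = measure_pmf.expectation (Qdp d p) (\<lambda>G. (weight_pow_sum d G (V d) 2 - (sigma_p p d)\<^sup>2)\<^sup>2)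
        / (sigma_p p d)\<^sup>2"
      by (simp add: power_divide)
    also have "\<dots> \<le> (1/2) * (2 - 15 * p / 8) ^ d / ((1/2) * r ^ d)"
      using expectation_weight_pow_sum_2_centered_sq_le[OF elim]
      unfolding sigma_p_sq[folded r_def] by (rule divide_right_mono) (use \<open>0 < r\<close> in simp)
    also have "\<dots> = ((2 - 15 * p / 8) / r) ^ d"
      using \<open>0 < r\<close> by (simp add: power_divide)
    finally show ?case .
  qed
qed simp

lemma cube_and_two_nbr_weight_tendsto:
  "tendsto_in_prob_zero (\<lambda>d. Qdp d p)
     (\<lambda>d G. (weight_pow_sum d G (V d) 3 + two_nbr_weight d G (V d)) / sigma_p p d)"
proof (rule tendsto_in_prob_zeroI_expectation)
  define \<theta> where "\<theta> = (2 - p)\<^sup>2 / 2 / sqrt ((4 - 3 * p) / 2)"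
  have "((2 - p)\<^sup>2 / 2)\<^sup>2 < (4 - 3 * p) / 2"
    using p by (intro sq_half_sq_two_minus_lt) auto
  then have "(2 - p)\<^sup>2 / 2 < sqrt ((4 - 3 * p) / 2)"
    by (rule real_less_rsqrt)
  then have "0 \<le> \<theta>" "\<theta> < 1"
    using variance_base_bounds by (auto simp: \<theta>_def)
  then show "(\<lambda>d. sqrt 2 * ((real d)\<^sup>2 * \<theta> ^ d)) \<longlonglongrightarrow> 0"
    by (intro tendsto_mult_right_zero tendsto_sq_mult_pow_zero)
  show "\<forall>\<^sub>F d in sequentially. measure_pmf.expectation (Qdp d p)
      (\<lambda>G. (weight_pow_sum d G (V d) 3 + two_nbr_weight d G (V d)) / sigma_p p d)
      \<le> sqrt 2 * ((real d)\<^sup>2 * \<theta> ^ d)"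
    using eventually_ge_at_top[of 1]
  proof eventually_elim
    case (elim d)
    have "measure_pmf.expectation (Qdp d p)
        (\<lambda>G. (weight_pow_sum d G (V d) 3 + two_nbr_weight d G (V d)) / sigma_p p d)
      = (measure_pmf.expectation (Qdp d p) (\<lambda>G. weight_pow_sum d G (V d) 3)
         + measure_pmf.expectation (Qdp d p) (\<lambda>G. two_nbr_weight d G (V d))) / sigma_p p d"
      by simp
    also have "\<dots> \<le> (real d)\<^sup>2 * (((2 - p)\<^sup>2 / 2) ^ d / sigma_p p d)"
      using expectation_weight_pow_sum_3_le[OF elim] expectation_two_nbr_weight_le_half[OF elim]
        sigma_p_pos[of d] by (simp add: divide_right_mono)
    also have "\<dots> = sqrt 2 * ((real d)\<^sup>2 * \<theta> ^ d)"
      unfolding pow_div_sigma_p \<theta>_def by simp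
    finally show ?case .
  qed
qed (simp_all add: divide_nonneg_pos sigma_p_pos weight_pow_sum_nonneg two_nbr_weight_nonneg)

lemma prob_Phi_large_tendsto:
  "(\<lambda>d. measure_pmf.prob (Qdp d p) {G. good_bound d / 4 < Phi d G (V d)}) \<longlonglongrightarrow> 0"
proof (rule Lim_null_comparison)
  show "(\<lambda>d. 2 * ((real d)\<^sup>2 * ((2 - p) / 2) ^ d)) \<longlonglongrightarrow> 0"
    using p by (intro tendsto_mult_right_zero tendsto_sq_mult_pow_zero) auto
  show "\<forall>\<^sub>F d in sequentially. norm (measure_pmf.prob (Qdp d p) {G. good_bound d / 4 < Phi d G (V d)})
      \<le> 2 * ((real d)\<^sup>2 * ((2 - p) / 2) ^ d)"
    using eventually_ge_at_top[of 1]
  proof eventually_elim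
    case (elim d)
    have "measure_pmf.prob (Qdp d p) {G. good_bound d / 4 < Phi d G (V d)}
        \<le> measure_pmf.expectation (Qdp d p) (\<lambda>G. Phi d G (V d)) / (good_bound d / 4)"
      using elim by (intro prob_gt_le_expectation)
        (auto simp: Phi_eq_weight_pow_sum weight_pow_sum_nonneg)
    also have "\<dots> = mu_p p d / (good_bound d / 4)"
      by (simp only: expectation_Phi[OF elim])
    also have "\<dots> = 2 * ((real d)\<^sup>2 * ((2 - p) / 2) ^ d)"
      using elim by (simp add: mu_p_def power_divide field_simps)
    finally show ?case
      by simp
  qed
qed

lemma tail_div_sigma_p_tendsto: "(\<lambda>d. exp (- good_bound d / 2) / sigma_p p d) \<longlonglongrightarrow> 0"
proof (rule Lim_null_comparison)
  show "(\<lambda>d::nat. exp (- (2 ^ d / (real d)\<^sup>2) / 2) * sqrt (2 ^ (d + 1))) \<longlonglongrightarrow> 0"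
    by real_asymp
  show "\<forall>\<^sub>F d in sequentially. norm (exp (- good_bound d / 2) / sigma_p p d)
      \<le> exp (- (2 ^ d / (real d)\<^sup>2) / 2) * sqrt (2 ^ (d + 1))"
  proof (intro always_eventually allI)
    fix d
    have "sqrt ((1/2) ^ (d + 1)) \<le> sigma_p p d"
      using p unfolding sigma_p_def by (simp add: power_mono)
    then have "exp (- good_bound d / 2) / sigma_p p d \<le> exp (- good_bound d / 2) / sqrt ((1/2) ^ (d + 1))"
      by (intro divide_left_mono) (auto intro!: mult_pos_pos sigma_p_pos)
    also have "\<dots> = exp (- (2 ^ d / (real d)\<^sup>2) / 2) * sqrt (2 ^ (d + 1))"
      by (simp add: power_one_over real_sqrt_divide)
    finally show "norm (exp (- good_bound d / 2) / sigma_p p d)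
        \<le> exp (- (2 ^ d / (real d)\<^sup>2) / 2) * sqrt (2 ^ (d + 1))"
      using sigma_p_pos[of d] by simp
  qed
qed

text \<open>At \<open>p = 2/3\<close> the variance \<open>\<sigma>\<^sub>p\<^sup>2 = 1/2\<close> does not vanish, which is where the factor
  \<open>\<zeta>\<^sub>p = e^{-1/4}\<close> comes from; for \<open>p > 2/3\<close>, \<open>e^{-\<sigma>\<^sub>p\<^sup>2/2} = 1 + O(\<sigma>\<^sub>p\<^sup>2)\<close>.\<close>
lemma zeta_error_div_sigma_p_tendsto:
  "(\<lambda>d. \<bar>exp (- (sigma_p p d)\<^sup>2 / 2) - zeta_p p\<bar> / sigma_p p d) \<longlonglongrightarrow> 0"
proof (cases "p = 2/3")
  case True
  then have "(4 - 3 * p) / 2 = 1"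
    by simp
  then have "exp (- (sigma_p p d)\<^sup>2 / 2) = zeta_p p" for d
    unfolding sigma_p_sq \<open>(4 - 3 * p) / 2 = 1\<close> using True by (simp add: zeta_p_def)
  then show ?thesis
    by simp
next
  case False
  then have "zeta_p p = 1" "(4 - 3 * p) / 2 < 1"
    using p by (auto simp: zeta_p_def)
  then have "norm (sqrt ((4 - 3 * p) / 2)) < 1"
    using variance_base_bounds by simp
  then have "(\<lambda>d. sqrt (1/2) * sqrt ((4 - 3 * p) / 2) ^ d / 2) \<longlonglongrightarrow> 0"
    by (intro tendsto_divide_zero tendsto_mult_right_zero LIMSEQ_power_zero)
  then have lim: "(\<lambda>d. sigma_p p d / 2) \<longlonglongrightarrow> 0"
    unfolding sigma_p_eq .
  have "norm (\<bar>exp (- (sigma_p p d)\<^sup>2 / 2) - zeta_p p\<bar> / sigma_p p d) \<le> sigma_p p d / 2" for d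
  proof -
    have "\<bar>exp (- (sigma_p p d)\<^sup>2 / 2) - exp 0\<bar> \<le> \<bar>- (sigma_p p d)\<^sup>2 / 2 - 0\<bar>"
      by (rule abs_exp_diff_le) simp_all
    then have "\<bar>exp (- (sigma_p p d)\<^sup>2 / 2) - zeta_p p\<bar> \<le> sigma_p p d * (sigma_p p d / 2)"
      using \<open>zeta_p p = 1\<close> by (simp add: power2_eq_square)
    then show ?thesis
      using sigma_p_pos[of d] by (simp add: divide_le_eq mult.commute)
  qed
  then show ?thesis
    by (intro Lim_null_comparison[OF always_eventually lim] allI)
qed

lemma GoodSum_div_exp_Phi_tendsto_zeta:
  "tendsto_in_prob_zero (\<lambda>d. Qdp d p)
     (\<lambda>d G. (GoodSum d G (V d) / exp (Phi d G (V d)) - zeta_p p) / sigma_p p d)"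
proof (rule tendsto_in_prob_zero_dominated[OF _ prob_Phi_large_tendsto, where c = 1])
  let ?err = "\<lambda>d. (exp (- good_bound d / 2) + \<bar>exp (- (sigma_p p d)\<^sup>2 / 2) - zeta_p p\<bar>) / sigma_p p d"
  let ?X = "\<lambda>d G. \<bar>weight_pow_sum d G (V d) 2 - (sigma_p p d)\<^sup>2\<bar> / sigma_p p d
    + (weight_pow_sum d G (V d) 3 + two_nbr_weight d G (V d)) / sigma_p p d + ?err d"
  have "?err \<longlonglongrightarrow> 0"
    using tail_div_sigma_p_tendsto zeta_error_div_sigma_p_tendsto
    by (simp add: add_divide_distrib tendsto_add_zero)
  then show "tendsto_in_prob_zero (\<lambda>d. Qdp d p) ?X"
    by (intro tendsto_in_prob_zero_add weight_pow_sum_2_centered_tendsto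
        cube_and_two_nbr_weight_tendsto tendsto_in_prob_zero_const)
  show "\<forall>\<^sub>F d in sequentially. \<forall>G. G \<notin> {G. good_bound d / 4 < Phi d G (V d)} \<longrightarrow>
      \<bar>(GoodSum d G (V d) / exp (Phi d G (V d)) - zeta_p p) / sigma_p p d\<bar> \<le> 1 * \<bar>?X d G\<bar>"
  proof (intro always_eventually allI impI)
    fix d G assume "G \<notin> {G. good_bound d / 4 < Phi d G (V d)}"
    then have "\<bar>GoodSum d G (V d) / exp (Phi d G (V d)) - exp (- (sigma_p p d)\<^sup>2 / 2)\<bar>
        \<le> \<bar>weight_pow_sum d G (V d) 2 - (sigma_p p d)\<^sup>2\<bar> / 2 + weight_pow_sum d G (V d) 3 / 3
          + two_nbr_weight d G (V d) + exp (- good_bound d / 2)"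
      using indep[of d] unfolding cube_indep_def by (intro GoodSum_div_exp_Phi_approx) auto
    moreover have "\<bar>a - z\<bar> \<le> \<bar>q\<bar> + (c + t) + (e + \<bar>b - z\<bar>)"
      if "\<bar>a - b\<bar> \<le> \<bar>q\<bar> / 2 + c / 3 + t + e" "0 \<le> c" for a b z q c t e :: real
      using that dist_triangle[of a z b] by (simp add: dist_real_def)
    ultimately have "\<bar>GoodSum d G (V d) / exp (Phi d G (V d)) - zeta_p p\<bar>
        \<le> \<bar>weight_pow_sum d G (V d) 2 - (sigma_p p d)\<^sup>2\<bar>
          + (weight_pow_sum d G (V d) 3 + two_nbr_weight d G (V d))
          + (exp (- good_bound d / 2) + \<bar>exp (- (sigma_p p d)\<^sup>2 / 2) - zeta_p p\<bar>)"
      using weight_pow_sum_nonneg by blast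
    then have "\<bar>(GoodSum d G (V d) / exp (Phi d G (V d)) - zeta_p p) / sigma_p p d\<bar> \<le> ?X d G"
      using sigma_p_pos[of d] by (simp add: abs_divide divide_right_mono flip: add_divide_distrib)
    also have "\<dots> \<le> 1 * \<bar>?X d G\<bar>"
      by simp
    finally show "\<bar>(GoodSum d G (V d) / exp (Phi d G (V d)) - zeta_p p) / sigma_p p d\<bar> \<le> 1 * \<bar>?X d G\<bar>" .
  qed
qed simp

lemma GoodSum_sub_zeta_exp_Phi_tendsto:
  "tendsto_in_prob_zero (\<lambda>d. Qdp d p)
     (\<lambda>d G. (GoodSum d G (V d) - zeta_p p * exp (Phi d G (V d))) / (sigma_p p d * exp (mu_p p d)))"
proof -
  have "(GoodSum d G (V d) - zeta_p p * exp (Phi d G (V d))) / (sigma_p p d * exp (mu_p p d))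
      = (GoodSum d G (V d) / exp (Phi d G (V d)) - zeta_p p) / sigma_p p d
        * exp (Phi d G (V d) - mu_p p d)" for d G
    using sigma_p_pos[of d] by (simp add: exp_diff field_simps)
  then show ?thesis
    by (simp only: tendsto_in_prob_zero_mult_bounded GoodSum_div_exp_Phi_tendsto_zeta
        bounded_in_prob_exp Phi_centered_bounded_in_prob)
qed

lemma GoodSum_div_zeta_exp_Phi_tendsto:
  "tendsto_in_prob_zero (\<lambda>d. Qdp d p) (\<lambda>d G. GoodSum d G (V d) / (zeta_p p * exp (Phi d G (V d))) - 1)"
proof (rule tendsto_in_prob_zero_dominated[OF GoodSum_div_exp_Phi_tendsto_zeta, where E = "\<lambda>_. {}"])
  have "0 < zeta_p p"
    by (simp add: zeta_p_def)
  then show "0 < 1 / zeta_p p"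
    by simp
  show "\<forall>\<^sub>F d in sequentially. \<forall>G. G \<notin> {} \<longrightarrow>
      \<bar>GoodSum d G (V d) / (zeta_p p * exp (Phi d G (V d))) - 1\<bar>
      \<le> 1 / zeta_p p * \<bar>(GoodSum d G (V d) / exp (Phi d G (V d)) - zeta_p p) / sigma_p p d\<bar>"
  proof (intro always_eventually allI impI)
    fix d G
    have "\<bar>GoodSum d G (V d) / exp (Phi d G (V d)) - zeta_p p\<bar>
        \<le> \<bar>GoodSum d G (V d) / exp (Phi d G (V d)) - zeta_p p\<bar> / sigma_p p d"
      using sigma_p_pos[of d] sigma_p_le_one[of d] by (simp add: le_divide_eq mult_left_le)
    then show "\<bar>GoodSum d G (V d) / (zeta_p p * exp (Phi d G (V d))) - 1\<bar>
        \<le> 1 / zeta_p p * \<bar>(GoodSum d G (V d) / exp (Phi d G (V d)) - zeta_p p) / sigma_p p d\<bar>"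
      using \<open>0 < zeta_p p\<close> sigma_p_pos[of d]
      by (simp add: abs_divide divide_right_mono field_simps)
  qed
qed simp

end

theorem lemma2p3:
  fixes p :: real
  assumes "2/3 \<le> p" and "p < 1"
  shows "\<forall>side \<in> {evens, odds}.
     (\<forall>\<epsilon>>0. (\<lambda>d. measure_pmf.prob (Qdp d p)
         {G. \<epsilon> < \<bar>(GoodSum d G (side d) - zeta_p p * exp (Phi d G (side d)))
                    / (sigma_p p d * exp (mu_p p d))\<bar>}) \<longlonglongrightarrow> 0)
   \<and> (\<forall>\<epsilon>>0. (\<lambda>d. measure_pmf.prob (Qdp d p)
         {G. \<epsilon> < \<bar>GoodSum d G (side d) / (zeta_p p * exp (Phi d G (side d))) - 1\<bar>}) \<longlonglongrightarrow> 0)"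
proof -
  have "tendsto_in_prob_zero (\<lambda>d. Qdp d p) (\<lambda>d G. (GoodSum d G (side d) - zeta_p p * exp (Phi d G (side d)))
          / (sigma_p p d * exp (mu_p p d)))
      \<and> tendsto_in_prob_zero (\<lambda>d. Qdp d p) (\<lambda>d G. GoodSum d G (side d) / (zeta_p p * exp (Phi d G (side d))) - 1)"
    if "side \<in> {evens, odds}" for side
  proof -
    have "cube_indep d (side d)" "1 \<le> d \<Longrightarrow> card (side d) = 2 ^ (d - 1)" for d
      using that cube_indep_evens cube_indep_odds card_evens_odds by auto
    then show ?thesis
      using GoodSum_sub_zeta_exp_Phi_tendsto[OF assms] GoodSum_div_zeta_exp_Phi_tendsto[OF assms] by simp
  qed
  then show ?thesis
    unfolding tendsto_in_prob_zero_def by blast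
qed

end
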